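(* Under Assumption 1 (as described in the context), $v_{\mathrm P}\le v_{\mathrm D}$.
   Context: Let $\mathcal X\subseteq\mathbb R^{d_x}$ be compact, $\mathcal Y\subseteq\mathbb R^{d_y}$, $\mathcal Z\subseteq\mathbb R^{d_z}$. Fix a loss $\Psi:\mathcal Z\times\mathcal Y\to\mathbb R\cup\{\infty\}$ and a decision rule $f:\mathcal X\to\mathcal Z$. Let $\widehat{\mathbb P}$ be an empirical (finitely supported) distribution on $\mathcal X\times\mathcal Y$ with first marginal $\widehat{\mathbb P}_{\widehat{\boldsymbol X}}$ and conditionals $\widehat{\mathbb P}_{\widehat{\boldsymbol Y}\mid\widehat{\boldsymbol X}=\widehat{\boldsymbol x}}$. Fix $p\in[1,\infty)$, $\rho\ge0$, $\epsilon>0$, and reference measures $\nu_{\mathcal X}$ on $\mathcal X$, $\nu_{\mathcal Y}$ on $\mathcal Y$. Cost: $c_p((\widehat{\boldsymbol x},\widehat{\boldsymbol y}),(\boldsymbol x,\boldsymbol y))=\|\boldsymbol x-\widehat{\boldsymbol x}\|^p+\|\boldsymbol y-\widehat{\boldsymbol y}\|^p$. A coupling $\gamma$ of $\mathbb P,\mathbb Q\in\mathcal P(\mathcal X\times\mathcal Y)$ is causal if for $((\widehat{\boldsymbol X},\widehat{\boldsymbol Y}),(\boldsymbol X,\boldsymbol Y))\sim\gamma$, $\boldsymbol X$ is conditionally independent of $\widehat{\boldsymbol Y}$ given $\widehat{\boldsymbol X}$; $\Gamma_c(\mathbb P,\mathbb Q)$ is the set of causal couplings. Causal Sinkhorn discrepancy: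 $R_p(\mathbb P,\mathbb Q)^p=\inf_{\gamma\in\Gamma_c(\mathbb P,\mathbb Q)}\{\mathbb E_\gamma[c_p]+\epsilon H(\gamma\mid\mathbb P\otimes\nu_{\mathcal X}\otimes\nu_{\mathcal Y})\}$, with $H$ the relative entropy. Primal: $v_{\mathrm P}=\sup\{\mathbb E_{\mathbb P}[\Psi(f(\boldsymbol x),\boldsymbol y)]:\ \mathbb P\in\mathcal P(\mathcal X\times\mathcal Y),\ R_p(\widehat{\mathbb P},\mathbb P)^p\le\rho^p\}$. Dual: $v_{\mathrm D}=\inf_{\lambda\ge0}\{\lambda\rho^p+\mathbb E_{\widehat{\boldsymbol x}\sim\widehat{\mathbb P}_{\widehat{\boldsymbol X}}}[\lambda\epsilon\log\int_{\mathcal X}\exp(g(\widehat{\boldsymbol x},\boldsymbol x,\lambda)/(\lambda\epsilon))\mathrm d\nu_{\mathcal X}(\boldsymbol x)]\}$ with $g(\widehat{\boldsymbol x},\boldsymbol x,\lambda)=\mathbb E_{\widehat{\boldsymbol y}\sim\widehat{\mathbb P}_{\widehat{\boldsymbol Y}\mid\widehat{\boldsymbol X}=\widehat{\boldsymbol x}}}[\lambda\epsilon\log\int_{\mathcal Y}\exp((\Psi(f(\boldsymbol x),\boldsymbol y)-\lambda c_p((\widehat{\boldsymbol x},\widehat{\boldsymbol y}),(\boldsymbol x,\boldsymbol y)))/(\lambda\epsilon))\mathrm d\nu_{\mathcal Y}(\boldsymbol y)]$. Assumption 1: (i) $\mathcal X,\mathcal Z$ measurable sets and $\Psi$, $f$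 measurable; (ii) every joint distribution $\gamma$ on $(\mathcal X\times\mathcal Y)^2$ with first marginal $\widehat{\mathbb P}$ has a regular conditional distribution given its first marginal; (iii) $c_p$ measurable with $0\le c_p<\infty$ for $\widehat{\mathbb P}\otimes\nu_{\mathcal X}\otimes\nu_{\mathcal Y}$-a.e. point; (iv) for every $\delta>0$, $\int_{\mathbb R^{d_x}}e^{-\delta\|\boldsymbol u\|^p}\mathrm d\nu_{\mathcal X}(\boldsymbol u)<\infty$ and $\int_{\mathbb R^{d_y}}e^{-\delta\|\boldsymbol u\|^p}\mathrm d\nu_{\mathcal Y}(\boldsymbol u)<\infty$. *)

theory Defs
  imports "HOL-Probability.Probability"
begin

definition eexp :: "ereal \<Rightarrow> ennreal" where
  "eexp t = (if t = \<infinity> then \<infinity> else if t = -\<infinity> then 0 else ennreal (exp (real_of_ereal t)))"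

definition eln :: "ennreal \<Rightarrow> ereal" where
  "eln u = (if u = 0 then -\<infinity> else if u = \<infinity> then \<infinity> else ereal (ln (enn2real u)))"

definition pos_int :: "'x measure \<Rightarrow> ('x \<Rightarrow> ereal) \<Rightarrow> ennreal" where
  "pos_int M g = (\<integral>\<^sup>+ z. e2ennreal (g z) \<partial>M)"

definition neg_int :: "'x measure \<Rightarrow> ('x \<Rightarrow> ereal) \<Rightarrow> ennreal" where
  "neg_int M g = (\<integral>\<^sup>+ z. e2ennreal (- g z) \<partial>M)"

definition expect_defined :: "'x measure \<Rightarrow> ('x \<Rightarrow> ereal) \<Rightarrow> bool" where
  "expect_defined M g \<longleftrightarrow> \<not> (pos_int M g = \<infinity> \<and> neg_int M g = \<infinity>)"

definition eexpect :: "'x measure \<Rightarrow> ('x \<Rightarrow> ereal) \<Rightarrow> ereal" where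
  "eexpect M g = enn2ereal (pos_int M g) - enn2ereal (neg_int M g)"

text \<open>When both the positive and the negative part of the integral are infinite,
  Isabelle's convention \<open>\<infinity> - \<infinity> = \<infinity>\<close> applies.\<close>
definition rel_entropy :: "'x measure \<Rightarrow> 'x measure \<Rightarrow> ereal" where
  "rel_entropy \<gamma> \<mu> =
     (if sets \<gamma> = sets \<mu> \<and> absolutely_continuous \<mu> \<gamma>
      then eexpect \<gamma> (\<lambda>z. ereal (ln (enn2real (RN_deriv \<mu> \<gamma> z))))
      else \<infinity>)"

definition cost_p :: "real \<Rightarrow> ('a::real_normed_vector \<times> 'b::real_normed_vector) \<Rightarrow> ('a \<times> 'b) \<Rightarrow> real" where
  "cost_p p w v = norm (fst v - fst w) powr p + norm (snd v - snd w) powr p"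

definition emp_measure :: "('a::topological_space \<times> 'b::topological_space) pmf \<Rightarrow> ('a \<times> 'b) measure" where
  "emp_measure Ph = distr (measure_pmf Ph) borel (\<lambda>z. z)"

definition ref_measure :: "('a \<times> 'b) measure \<Rightarrow> 'a measure \<Rightarrow> 'b measure \<Rightarrow> (('a \<times> 'b) \<times> ('a \<times> 'b)) measure" where
  "ref_measure P nuX nuY = P \<Otimes>\<^sub>M (nuX \<Otimes>\<^sub>M nuY)"

definition is_coupling :: "(('a::topological_space \<times> 'b::topological_space) \<times> ('a \<times> 'b)) measure \<Rightarrow> ('a \<times> 'b) measure \<Rightarrow> ('a \<times> 'b) measure \<Rightarrow> bool" where
  "is_coupling \<gamma> P Q \<longleftrightarrow> prob_space \<gamma> \<and> distr \<gamma> borel fst = P \<and> distr \<gamma> borel snd = Q"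

text \<open>Causality: for \<open>((X',Y'),(X,Y)) \<sim> \<gamma>\<close>, \<open>X\<close> is conditionally independent of \<open>Y'\<close>
  given \<open>X'\<close>.  Since the first marginal is finitely supported, \<open>X'\<close> is a discrete
  random variable and conditional independence is the elementary one.\<close>
definition is_causal :: "(('a::topological_space \<times> 'b::topological_space) \<times> ('a \<times> 'b)) measure \<Rightarrow> bool" where
  "is_causal \<gamma> \<longleftrightarrow>
     (\<forall>xh. \<forall>A \<in> sets (borel :: 'a measure). \<forall>B \<in> sets (borel :: 'b measure).
        measure \<gamma> {w \<in> space \<gamma>. fst (snd w) \<in> A \<and> snd (fst w) \<in> B \<and> fst (fst w) = xh}
          * measure \<gamma> {w \<in> space \<gamma>. fst (fst w) = xh}
        = measure \<gamma> {w \<in> space \<gamma>. fst (snd w) \<in> A \<and> fst (fst w) = xh}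
          * measure \<gamma> {w \<in> space \<gamma>. snd (fst w) \<in> B \<and> fst (fst w) = xh})"

definition causal_sinkhorn_p ::
  "real \<Rightarrow> real \<Rightarrow> 'a::euclidean_space measure \<Rightarrow> 'b::euclidean_space measure \<Rightarrow>
   ('a \<times> 'b) measure \<Rightarrow> ('a \<times> 'b) measure \<Rightarrow> ereal" where
  "causal_sinkhorn_p p \<epsilon> nuX nuY P Q =
     (INF \<gamma> \<in> {\<gamma>. sets \<gamma> = sets (ref_measure P nuX nuY) \<and> is_coupling \<gamma> P Q \<and> is_causal \<gamma>}.
        enn2ereal (\<integral>\<^sup>+ w. ennreal (cost_p p (fst w) (snd w)) \<partial>\<gamma>)
        + ereal \<epsilon> * rel_entropy \<gamma> (ref_measure P nuX nuY))"

definition primal_value ::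
  "real \<Rightarrow> real \<Rightarrow> real \<Rightarrow> 'a::euclidean_space set \<Rightarrow> 'b::euclidean_space set \<Rightarrow>
   'a measure \<Rightarrow> 'b measure \<Rightarrow> ('c \<times> 'b \<Rightarrow> ereal) \<Rightarrow> ('a \<Rightarrow> 'c) \<Rightarrow> ('a \<times> 'b) pmf \<Rightarrow> ereal" where
  "primal_value p \<epsilon> \<rho> X Y nuX nuY \<Psi> f Ph =
     (SUP P \<in> {P. prob_space P \<and> sets P = sets (borel :: ('a \<times> 'b) measure)
                 \<and> (AE z in P. z \<in> X \<times> Y)
                 \<and> expect_defined P (\<lambda>z. \<Psi> (f (fst z), snd z))
                 \<and> causal_sinkhorn_p p \<epsilon> nuX nuY (emp_measure Ph) P \<le> ereal (\<rho> powr p)}.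
        eexpect P (\<lambda>z. \<Psi> (f (fst z), snd z)))"

text \<open>The function \<open>g(x', x, \<lambda>)\<close>; the expectation over the (finitely supported)
  conditional empirical distribution of \<open>Y'\<close> given \<open>X' = x'\<close> is written as a finite sum.\<close>
definition g_fun ::
  "real \<Rightarrow> real \<Rightarrow> 'b::euclidean_space measure \<Rightarrow> ('c \<times> 'b \<Rightarrow> ereal) \<Rightarrow> ('a::euclidean_space \<Rightarrow> 'c)
   \<Rightarrow> ('a \<times> 'b) pmf \<Rightarrow> 'a \<Rightarrow> 'a \<Rightarrow> real \<Rightarrow> ereal" where
  "g_fun p \<epsilon> nuY \<Psi> f Ph xh x lam =
     (\<Sum>z \<in> {z \<in> set_pmf Ph. fst z = xh}.
        ereal (pmf Ph z / pmf (map_pmf fst Ph) xh) *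
        (ereal (lam * \<epsilon>) *
         eln (\<integral>\<^sup>+ y. eexp ((\<Psi> (f x, y) - ereal (lam * cost_p p z (x, y))) * ereal (1 / (lam * \<epsilon>))) \<partial>nuY)))"

definition dual_obj ::
  "real \<Rightarrow> real \<Rightarrow> real \<Rightarrow> 'a::euclidean_space measure \<Rightarrow> 'b::euclidean_space measure \<Rightarrow>
   ('c \<times> 'b \<Rightarrow> ereal) \<Rightarrow> ('a \<Rightarrow> 'c) \<Rightarrow> ('a \<times> 'b) pmf \<Rightarrow> real \<Rightarrow> ereal" where
  "dual_obj p \<epsilon> \<rho> nuX nuY \<Psi> f Ph lam =
     ereal (lam * \<rho> powr p) +
     (\<Sum>xh \<in> set_pmf (map_pmf fst Ph).
        ereal (pmf (map_pmf fst Ph) xh) *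
        (ereal (lam * \<epsilon>) *
         eln (\<integral>\<^sup>+ x. eexp (g_fun p \<epsilon> nuY \<Psi> f Ph xh x lam * ereal (1 / (lam * \<epsilon>))) \<partial>nuX)))"

text \<open>The infimum is over \<open>\<lambda> > 0\<close>; the value at \<open>\<lambda> = 0\<close> is understood
  as the limit \<open>\<lambda> \<rightarrow> 0+\<close>, which does not change the infimum.\<close>
definition dual_value ::
  "real \<Rightarrow> real \<Rightarrow> real \<Rightarrow> 'a::euclidean_space measure \<Rightarrow> 'b::euclidean_space measure \<Rightarrow>
   ('c \<times> 'b \<Rightarrow> ereal) \<Rightarrow> ('a \<Rightarrow> 'c) \<Rightarrow> ('a \<times> 'b) pmf \<Rightarrow> ereal" where
  "dual_value p \<epsilon> \<rho> nuX nuY \<Psi> f Ph = (INF lam \<in> {0<..}. dual_obj p \<epsilon> \<rho> nuX nuY \<Psi> f Ph lam)"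

end

theory Submission
  imports Defs
begin

text \<open>
  Fix \<open>\<lambda> > 0\<close> and replace \<open>\<Psi>(f x, y)\<close> by its truncation \<open>\<psi> = min (\<Psi>(f x, y)) n\<close>.  For a causal
  coupling \<open>\<gamma>\<close> of \<open>P'\<close> (the empirical distribution) and \<open>P\<close>, with \<open>\<mu> = P' \<otimes> \<nu>\<^sub>X \<otimes> \<nu>\<^sub>Y\<close>, consider
  \<open>\<phi>(x', y', x, y) = (\<psi>(x, y) - \<lambda> c) / (\<lambda>\<epsilon>) - L(x', y', x) + G(x', x) - K(x')\<close>,
  where \<open>L\<close> is the logarithm of the \<open>\<nu>\<^sub>Y\<close>-integral of \<open>exp ((\<psi> - \<lambda> c) / (\<lambda>\<epsilon>))\<close>, \<open>G\<close> is the
  conditional mean of \<open>L\<close> over \<open>y'\<close> given \<open>x'\<close>, and \<open>K\<close> is the logarithm of the \<open>\<nu>\<^sub>X\<close>-integral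
  of \<open>exp G\<close>.  Integrating out \<open>y\<close> and then \<open>x\<close> gives \<open>\<integral> exp \<phi> d\<mu> \<le> 1\<close>, so Gibbs' inequality
  yields \<open>E\<^sub>\<gamma> \<phi> \<le> H(\<gamma> | \<mu>)\<close>.  Causality (\<open>x\<close> is independent of \<open>y'\<close> given \<open>x'\<close>) gives
  \<open>E\<^sub>\<gamma> G = E\<^sub>\<gamma> L\<close>, hence \<open>E\<^sub>P \<psi> \<le> \<lambda> (E\<^sub>\<gamma> c + \<epsilon> H(\<gamma> | \<mu>)) + \<lambda>\<epsilon> E\<^sub>P\<^sub>' K\<close>.  The infimum over
  \<open>\<gamma>\<close> is at most \<open>\<lambda> \<rho>\<^sup>p + \<lambda>\<epsilon> E\<^sub>P\<^sub>' K\<close>, and \<open>\<psi> \<le> \<Psi> \<circ> f\<close> makes \<open>\<lambda>\<epsilon> G \<le> g\<close>, so this is at most the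
  dual objective at \<open>\<lambda>\<close>.  To keep every term integrable \<open>L\<close> is first truncated below at \<open>-T\<close>;
  \<open>T \<rightarrow> \<infinity>\<close> by dominated convergence, and \<open>n \<rightarrow> \<infinity>\<close> by monotone convergence.
\<close>

lemma ennreal_mult_divide_le: "b * (a / b) \<le> (a :: ennreal)"
proof (cases "b = 0 \<or> b = top")
  case False
  then have "b * (a / b) = a"
    by (simp add: ennreal_times_divide mult.commute[of b a] ennreal_mult_divide_eq)
  then show ?thesis by simp
qed auto

lemma eexp_ereal [simp]: "eexp (ereal r) = ennreal (exp r)"
  unfolding eexp_def by simp

lemma eexp_mono: "a \<le> b \<Longrightarrow> eexp a \<le> eexp b"
  unfolding eexp_def by (cases a; cases b) (auto intro: ennreal_leI)

lemma ln_enn2real_le_eln: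
  assumes "0 < a" "a < \<infinity>" "a \<le> u"
  shows "ereal (ln (enn2real a)) \<le> eln u"
proof (cases "u = \<infinity>")
  case False
  have "u \<noteq> 0" using assms by auto
  moreover have "enn2real a \<le> enn2real u"
    using assms False by (intro enn2real_mono) (auto simp: top.not_eq_extremum)
  moreover have "enn2real a > 0" using assms by (simp add: enn2real_positive_iff)
  ultimately show ?thesis unfolding eln_def using False by auto
qed (simp add: eln_def)

lemma norm_powr_le_shift:
  fixes y c :: "'a::real_normed_vector"
  assumes "p \<ge> 0"
  shows "norm y powr p \<le> 2 powr p * (norm (y - c) powr p + norm c powr p)"
proof -
  define m where "m = max (norm (y - c)) (norm c)"
  have "norm y \<le> norm (y - c) + norm c" by (metis norm_triangle_ineq diff_add_cancel)
  also have "\<dots> \<le> 2 * m" unfolding m_def by simp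
  finally have "norm y powr p \<le> (2 * m) powr p" using assms by (intro powr_mono2) auto
  also have "\<dots> = 2 powr p * m powr p" unfolding m_def by (simp add: powr_mult)
  also have "m powr p \<le> norm (y - c) powr p + norm c powr p" unfolding m_def max_def by auto
  finally show ?thesis by simp
qed

lemma nn_integral_exp_norm_shift_finite:
  fixes \<nu> :: "'a::real_normed_vector measure"
  assumes sets: "sets \<nu> = sets borel" and "p \<ge> 0" and "\<delta> > 0"
    and moment: "\<And>\<delta>. \<delta> > 0 \<Longrightarrow> (\<integral>\<^sup>+ u. ennreal (exp (- \<delta> * norm u powr p)) \<partial>\<nu>) < \<infinity>"
  shows "(\<integral>\<^sup>+ y. ennreal (exp (- \<delta> * norm (y - c) powr p)) \<partial>\<nu>) < \<infinity>"
proof -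
  define \<delta>' where "\<delta>' = \<delta> / 2 powr p"
  have \<delta>': "\<delta>' > 0" using \<open>\<delta> > 0\<close> unfolding \<delta>'_def by simp
  have "(\<integral>\<^sup>+ y. ennreal (exp (- \<delta> * norm (y - c) powr p)) \<partial>\<nu>)
      \<le> (\<integral>\<^sup>+ y. ennreal (exp (\<delta> * norm c powr p)) * ennreal (exp (- \<delta>' * norm y powr p)) \<partial>\<nu>)"
  proof (intro nn_integral_mono)
    fix y
    have "\<delta>' * norm y powr p \<le> \<delta>' * (2 powr p * (norm (y - c) powr p + norm c powr p))"
      using \<delta>' norm_powr_le_shift[OF \<open>p \<ge> 0\<close>] by (intro mult_left_mono) auto
    also have "\<dots> = \<delta> * (norm (y - c) powr p + norm c powr p)" unfolding \<delta>'_def by simp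
    finally have "exp (- \<delta> * norm (y - c) powr p) \<le> exp (\<delta> * norm c powr p) * exp (- \<delta>' * norm y powr p)"
      by (simp add: exp_add[symmetric] algebra_simps)
    then show "ennreal (exp (- \<delta> * norm (y - c) powr p))
        \<le> ennreal (exp (\<delta> * norm c powr p)) * ennreal (exp (- \<delta>' * norm y powr p))"
      by (simp add: ennreal_mult[symmetric] ennreal_leI)
  qed
  also have "\<dots> = ennreal (exp (\<delta> * norm c powr p)) * (\<integral>\<^sup>+ y. ennreal (exp (- \<delta>' * norm y powr p)) \<partial>\<nu>)"
    by (rule nn_integral_cmult) (simp add: measurable_cong_sets[OF sets refl])
  also have "\<dots> < \<infinity>" using moment[OF \<delta>'] by (simp add: ennreal_mult_less_top)
  finally show ?thesis .
qed

lemma sigma_finite_of_positive_integrable: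
  assumes h: "h \<in> borel_measurable M" and pos: "\<And>x. x \<in> space M \<Longrightarrow> h x > 0"
    and fin: "(\<integral>\<^sup>+ x. ennreal (h x) \<partial>M) < \<infinity>"
  shows "sigma_finite_measure M"
proof -
  define A where "A k = {x \<in> space M. 1 / Suc k \<le> h x}" for k :: nat
  have A_sets: "A k \<in> sets M" for k unfolding A_def using h by measurable
  have A_finite: "emeasure M (A k) \<noteq> \<infinity>" for k
  proof -
    have "emeasure M (A k) = (\<integral>\<^sup>+ x. indicator (A k) x \<partial>M)" using A_sets by simp
    also have "\<dots> \<le> (\<integral>\<^sup>+ x. ennreal (Suc k) * ennreal (h x) \<partial>M)"
    proof (intro nn_integral_mono)
      fix x show "indicator (A k) x \<le> ennreal (Suc k) * ennreal (h x)"
      proof (cases "x \<in> A k")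
        case True
        then have "1 \<le> real (Suc k) * h x" unfolding A_def by (simp add: field_simps)
        then have "ennreal 1 \<le> ennreal (real (Suc k) * h x)" by (rule ennreal_leI)
        also have "\<dots> = ennreal (Suc k) * ennreal (h x)"
          using True pos unfolding A_def by (intro ennreal_mult) (auto intro: less_imp_le)
        finally show ?thesis using True by simp
      qed simp
    qed
    also have "\<dots> = ennreal (Suc k) * (\<integral>\<^sup>+ x. ennreal (h x) \<partial>M)"
      using h by (intro nn_integral_cmult) simp
    also have "\<dots> < \<infinity>" using fin by (simp add: ennreal_mult_less_top)
    finally show ?thesis by simp
  qed
  have "\<exists>k. x \<in> A k" if x: "x \<in> space M" for x
  proof -
    obtain k :: nat where "1 / h x \<le> k" using real_arch_simple by blast
    then have "1 \<le> real (Suc k) * h x" using pos[OF x] by (simp add: field_simps)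
    then show ?thesis using x pos[OF x] unfolding A_def by (intro exI[of _ k]) (simp add: field_simps)
  qed
  then have "(\<Union>k. A k) = space M" unfolding A_def by auto
  then show ?thesis unfolding sigma_finite_measure_def
    using A_sets A_finite by (intro exI[of _ "range A"]) (auto simp: infinity_ennreal_def)
qed

lemma borel_measurable_compose_Pair:
  assumes "(\<lambda>t. F (fst t) (snd t)) \<in> borel_measurable (A \<Otimes>\<^sub>M B)"
    and "g \<in> measurable M A" and "h \<in> measurable M B"
  shows "(\<lambda>x. F (g x) (h x)) \<in> borel_measurable M"
  using measurable_compose[OF measurable_Pair[OF assms(2,3)] assms(1)] by simp

lemma ereal_le_affine_of_INF_le:
  fixes a :: ereal and V :: "'g \<Rightarrow> ereal"
  assumes lam: "lam > 0" and le: "\<And>g. g \<in> G \<Longrightarrow> a \<le> ereal lam * V g + ereal s"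
    and inf: "(INF g\<in>G. V g) \<le> ereal r"
  shows "a \<le> ereal lam * ereal r + ereal s"
proof (rule ccontr)
  assume "\<not> ?thesis"
  then have gt: "ereal (lam * r + s) < a" by simp
  show False
  proof (cases a)
    case PInf
    have "(INF g\<in>G. V g) < ereal (r + 1)" using inf by (rule le_less_trans) simp
    then obtain g where g: "g \<in> G" "V g < ereal (r + 1)" by (auto simp: INF_less_iff)
    then have "ereal lam * V g + ereal s \<noteq> \<infinity>" using lam by (cases "V g") auto
    then show False using le[OF g(1)] PInf by auto
  next
    case (real e)
    define c where "c = (e - s) / lam"
    have "r < c" using gt real lam unfolding c_def by (simp add: field_simps)
    then have "(INF g\<in>G. V g) < ereal c" using inf by (intro le_less_trans[OF inf]) simp
    then obtain g where g: "g \<in> G" "V g < ereal c" by (auto simp: INF_less_iff)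
    have "ereal lam * V g + ereal s < ereal e"
    proof (cases "V g")
      case (real v)
      then have "lam * v + s < lam * c + s" using g lam by simp
      also have "lam * c + s = e" unfolding c_def using lam by simp
      finally show ?thesis using real by simp
    qed (use g lam in auto)
    then show False using le[OF g(1)] real by simp
  qed (use gt in simp)
qed

lemma ereal_le_of_tendsto:
  assumes "\<And>n. E \<le> ereal (a n)" and "a \<longlonglongrightarrow> l"
  shows "E \<le> ereal l"
proof (cases E)
  case (real e)
  then have "e \<le> l" using assms by (intro LIMSEQ_le_const[OF assms(2)]) auto
  then show ?thesis using real by simp
qed (use assms(1)[of 0] in auto)

lemma neg_int_truncation:
  assumes "AE z in P. ereal (v z) = min (u z) (ereal c)" and "c \<ge> 0"
  shows "neg_int P (\<lambda>z. ereal (v z)) = neg_int P u"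
  unfolding neg_int_def
proof (rule nn_integral_cong_AE, use assms(1) in eventually_elim)
  fix z assume z: "ereal (v z) = min (u z) (ereal c)"
  show "e2ennreal (- ereal (v z)) = e2ennreal (- u z)"
  proof (cases "u z \<le> ereal c")
    case True
    then show ?thesis using z by (simp add: min_def)
  next
    case False
    then have "v z = c" using z by (simp add: min_def)
    moreover have "- u z \<le> 0" using False \<open>c \<ge> 0\<close> by (cases "u z") auto
    ultimately show ?thesis using \<open>c \<ge> 0\<close> by (simp add: e2ennreal_neg ennreal_neg)
  qed
qed

lemma pos_int_SUP_truncations:
  assumes trunc: "AE z in P. \<forall>n. ereal (v n z) = min (u z) (ereal (real n))"
    and meas: "\<And>n. v n \<in> borel_measurable P"
  shows "pos_int P u = (SUP n. pos_int P (\<lambda>z. ereal (v n z)))"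
proof -
  have "pos_int P u = (\<integral>\<^sup>+ z. (SUP n. ennreal (v n z)) \<partial>P)"
    unfolding pos_int_def
  proof (rule nn_integral_cong_AE, use trunc in eventually_elim)
    fix z assume z: "\<forall>n. ereal (v n z) = min (u z) (ereal (real n))"
    show "e2ennreal (u z) = (SUP n. ennreal (v n z))"
    proof (cases "u z")
      case PInf
      then have "v n z = real n" for n using z by simp
      then show ?thesis
        using PInf by (simp add: ennreal_of_nat_eq_real_of_nat[symmetric] ennreal_SUP_of_nat_eq_top)
    next
      case (real r)
      have v: "v n z = min r (real n)" for n
      proof -
        have "ereal (v n z) = min (ereal r) (ereal (real n))" using z real by simp
        then show ?thesis by (simp add: min_def split: if_splits)
      qed
      have "v (nat \<lceil>r\<rceil>) z = r" unfolding v using real_nat_ceiling_ge[of r] by simp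
      then have "(SUP n. ennreal (v n z)) = ennreal r"
        by (intro antisym SUP_least ennreal_leI) (auto simp: v intro!: SUP_upper2[of "nat \<lceil>r\<rceil>"])
      then show ?thesis using real by simp
    qed (use z in simp)
  qed
  also have "\<dots> = (SUP n. \<integral>\<^sup>+ z. ennreal (v n z) \<partial>P)"
  proof (rule nn_integral_monotone_convergence_SUP_AE)
    show "AE z in P. ennreal (v n z) \<le> ennreal (v (Suc n) z)" for n
    proof (use trunc in eventually_elim)
      fix z assume z: "\<forall>n. ereal (v n z) = min (u z) (ereal (real n))"
      have "min (u z) (ereal (real n)) \<le> min (u z) (ereal (real (Suc n)))" by (intro min.mono) auto
      then have "ereal (v n z) \<le> ereal (v (Suc n) z)" using z by simp
      then show "ennreal (v n z) \<le> ennreal (v (Suc n) z)" by (intro ennreal_leI) simp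
    qed
  qed (use meas in measurable)
  finally show ?thesis unfolding pos_int_def by simp
qed

lemma eexpect_le_of_truncations:
  assumes trunc: "AE z in P. \<forall>n. ereal (v n z) = min (u z) (ereal (real n))"
    and meas: "\<And>n. v n \<in> borel_measurable P"
    and defined: "expect_defined P u"
    and le: "\<And>n. eexpect P (\<lambda>z. ereal (v n z)) \<le> D"
  shows "eexpect P u \<le> D"
proof -
  define pos where "pos n = pos_int P (\<lambda>z. ereal (v n z))" for n
  have neg: "neg_int P (\<lambda>z. ereal (v n z)) = neg_int P u" for n
    using trunc by (intro neg_int_truncation) auto
  have E: "eexpect P (\<lambda>z. ereal (v n z)) = enn2ereal (pos n) - enn2ereal (neg_int P u)" for n
    unfolding eexpect_def pos_def neg ..
  show ?thesis
  proof (cases "neg_int P u = \<infinity>")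
    case True
    then have "pos_int P u \<noteq> \<infinity>" using defined unfolding expect_defined_def by auto
    then show ?thesis unfolding eexpect_def using True by (cases "pos_int P u") auto
  next
    case False
    then obtain c where c: "neg_int P u = ennreal c" "c \<ge> 0"
      by (cases "neg_int P u" rule: ennreal_cases) auto
    show ?thesis
    proof (cases D)
      case MInf
      have "enn2ereal (pos 0) - ereal c \<le> - \<infinity>" using le[of 0] E[of 0] c MInf by simp
      then show ?thesis by (cases "enn2ereal (pos 0)") auto
    next
      case (real d)
      have pos_le: "enn2ereal (pos n) \<le> ereal (d + c)" for n
      proof -
        have "enn2ereal (pos n) - ereal c \<le> ereal d" using le[of n] E[of n] c real by simp
        then show ?thesis by (cases "enn2ereal (pos n)") auto
      qed
      have dc: "0 \<le> d + c" using order_trans[OF enn2ereal_nonneg pos_le[of 0]] by simp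
      have "pos n \<le> ennreal (d + c)" for n
        using e2ennreal_mono[OF pos_le[of n]] by simp
      then have "pos_int P u \<le> ennreal (d + c)"
        unfolding pos_int_SUP_truncations[OF trunc meas] pos_def[symmetric] by (rule SUP_least)
      then have "enn2ereal (pos_int P u) \<le> ereal (d + c)"
        using dc by (simp add: less_eq_ennreal.rep_eq)
      then show ?thesis
        unfolding eexpect_def c(1) using c(2) real by (cases "enn2ereal (pos_int P u)") auto
    qed simp
  qed
qed

text \<open>The pointwise form \<open>ln s \<le> s - 1\<close> of Gibbs' inequality, for \<open>s = exp \<phi> / t\<close> and
  \<open>\<tau> \<phi> = A - \<lambda> C - B\<close>, with every term moved to the side where it is nonnegative so that it
  can be integrated in \<open>ennreal\<close> even when some of the integrals are infinite.\<close>

lemma gibbs_pointwise_ennreal: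
  fixes \<tau> lam A B C t \<phi> :: real
  assumes \<tau>: "\<tau> > 0" and lam: "lam > 0" and C: "C \<ge> 0" and t: "t > 0"
    and \<phi>: "\<tau> * \<phi> = A - lam * C - B"
  shows "ennreal A + ennreal \<tau> * ennreal (- ln t) + ennreal \<tau> + ennreal (- B)
    \<le> ennreal (- A) + ennreal lam * ennreal C + ennreal \<tau> * ennreal (ln t)
       + ennreal \<tau> * (ennreal (exp \<phi>) / ennreal t) + ennreal B"
proof -
  have "ln (exp \<phi> / t) \<le> exp \<phi> / t - 1" using t by (intro ln_le_minus_one) auto
  then have "\<tau> * (\<phi> - ln t) \<le> \<tau> * (exp \<phi> / t - 1)"
    using t \<tau> by (intro mult_left_mono) (auto simp: ln_div)
  then have "A + \<tau> \<le> lam * C + \<tau> * ln t + \<tau> * (exp \<phi> / t) + B"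
    using \<phi> by (simp add: algebra_simps)
  moreover have "\<tau> * ln t = \<tau> * max (ln t) 0 - \<tau> * max (- ln t) 0"
  proof -
    have "ln t = max (ln t) 0 - max (- ln t) 0" by auto
    then show ?thesis by (metis right_diff_distrib)
  qed
  moreover have "A = max A 0 - max (- A) 0" "B = max B 0 - max (- B) 0" by auto
  ultimately have ineq: "max A 0 + \<tau> * max (- ln t) 0 + \<tau> + max (- B) 0
      \<le> max (- A) 0 + lam * C + \<tau> * max (ln t) 0 + \<tau> * (exp \<phi> / t) + max B 0"
    by linarith
  have pos: "ennreal (max x 0) = ennreal x" for x by (simp add: ennreal_neg max_def)
  have mult: "ennreal \<tau> * ennreal x = ennreal (\<tau> * max x 0)" for x
  proof -
    have "ennreal (\<tau> * max x 0) = ennreal \<tau> * ennreal (max x 0)" using \<tau> by (intro ennreal_mult) auto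
    then show ?thesis by (simp only: pos)
  qed
  have lam_C: "ennreal lam * ennreal C = ennreal (lam * C)"
    using lam C by (simp add: ennreal_mult[symmetric])
  have div: "ennreal \<tau> * (ennreal (exp \<phi>) / ennreal t) = ennreal (\<tau> * (exp \<phi> / t))"
    using \<tau> t by (simp add: ennreal_mult[symmetric] divide_ennreal)
  have "ennreal A + ennreal \<tau> * ennreal (- ln t) + ennreal \<tau> + ennreal (- B)
      = ennreal (max A 0) + ennreal (\<tau> * max (- ln t) 0) + ennreal \<tau> + ennreal (max (- B) 0)"
    by (simp only: mult pos)
  also have "\<dots> = ennreal (max A 0 + \<tau> * max (- ln t) 0 + \<tau> + max (- B) 0)"
    using \<tau> by (simp add: ennreal_plus)
  also have "\<dots> \<le> ennreal (max (- A) 0 + lam * C + \<tau> * max (ln t) 0 + \<tau> * (exp \<phi> / t) + max B 0)"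
    by (rule ennreal_leI[OF ineq])
  also have "\<dots> = ennreal (max (- A) 0) + ennreal (lam * C) + ennreal (\<tau> * max (ln t) 0)
      + ennreal (\<tau> * (exp \<phi> / t)) + ennreal (max B 0)"
    using \<tau> lam C t by (simp add: ennreal_plus)
  also have "\<dots> = ennreal (- A) + ennreal lam * ennreal C + ennreal \<tau> * ennreal (ln t)
       + ennreal \<tau> * (ennreal (exp \<phi>) / ennreal t) + ennreal B"
    by (simp only: mult pos lam_C div)
  finally show ?thesis .
qed

lemma AE_RN_deriv_pos_finite:
  assumes M: "sigma_finite_measure M" and N: "sigma_finite_measure N"
    and ac: "absolutely_continuous M N" and sets: "sets N = sets M"
  shows "AE x in N. 0 < RN_deriv M N x \<and> RN_deriv M N x < \<infinity>"
proof -
  have "AE x in M. RN_deriv M N x \<noteq> \<infinity>"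
    by (rule sigma_finite_measure.RN_deriv_finite[OF M N ac sets])
  then have "AE x in N. RN_deriv M N x \<noteq> \<infinity>"
    using absolutely_continuous_AE[OF sets ac] by blast
  moreover have "AE x in N. 0 < RN_deriv M N x"
    by (subst sigma_finite_measure.density_RN_deriv[OF M ac sets, symmetric])
      (simp add: AE_density)
  ultimately show ?thesis by eventually_elim (simp add: top.not_eq_extremum)
qed

lemma nn_integral_divide_RN_deriv_le:
  assumes M: "sigma_finite_measure M" and ac: "absolutely_continuous M N" and sets: "sets N = sets M"
    and g: "g \<in> borel_measurable M"
  shows "(\<integral>\<^sup>+ x. g x / RN_deriv M N x \<partial>N) \<le> (\<integral>\<^sup>+ x. g x \<partial>M)"
proof -
  have "(\<integral>\<^sup>+ x. g x / RN_deriv M N x \<partial>N) = (\<integral>\<^sup>+ x. RN_deriv M N x * (g x / RN_deriv M N x) \<partial>M)"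
    using g by (subst sigma_finite_measure.density_RN_deriv[OF M ac sets, symmetric])
      (simp add: nn_integral_density)
  also have "\<dots> \<le> (\<integral>\<^sup>+ x. g x \<partial>M)"
    by (intro nn_integral_mono ennreal_mult_divide_le)
  finally show ?thesis .
qed

text \<open>Reassembles the integrated Gibbs inequality from the positive and negative parts of the
  payoff (\<open>PA\<close>, \<open>NA\<close>), the log-density (\<open>Hp\<close>, \<open>Hn\<close>) and the log-partition shift
  (\<open>Bp\<close>, \<open>Bn\<close>), given the cost \<open>Cc\<close> and \<open>I = \<integral> exp \<phi> / q d\<gamma> \<le> 1\<close>.\<close>

lemma ereal_le_of_ennreal_parts:
  fixes PA NA Cc Hp Hn I Bp Bn :: ennreal and lam eps k :: real
  assumes lam: "lam > 0" and eps: "eps > 0" and PA: "PA < \<infinity>"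
    and Bp: "Bp < \<infinity>" and Bn: "Bn < \<infinity>" and I: "I \<le> 1" and k: "enn2real Bp - enn2real Bn = k"
    and main: "PA + ennreal (lam * eps) * Hn + ennreal (lam * eps) + Bn
      \<le> NA + ennreal lam * Cc + ennreal (lam * eps) * Hp + ennreal (lam * eps) * I + Bp"
  shows "enn2ereal PA - enn2ereal NA
    \<le> ereal lam * (enn2ereal Cc + ereal eps * (enn2ereal Hp - enn2ereal Hn)) + ereal k"
proof (cases "Cc = \<infinity> \<or> Hp = \<infinity> \<or> NA = \<infinity>")
  case True
  then show ?thesis
  proof (elim disjE)
    assume "NA = \<infinity>"
    then have "enn2ereal PA - enn2ereal NA = - \<infinity>" using PA by (cases PA) auto
    then show ?thesis by simp
  qed (use lam eps in auto)
next
  case False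
  define \<tau> where "\<tau> = lam * eps"
  have \<tau>: "\<tau> > 0" using lam eps unfolding \<tau>_def by simp
  have fin: "Cc < \<infinity>" "Hp < \<infinity>" "NA < \<infinity>" "I < \<infinity>"
    using False I by (auto simp: top.not_eq_extremum intro: le_less_trans)
  have "0 + ennreal \<tau> * Hn + 0 + 0 \<le> PA + ennreal \<tau> * Hn + ennreal \<tau> + Bn"
    by (intro add_mono) auto
  then have "ennreal \<tau> * Hn \<le> PA + ennreal \<tau> * Hn + ennreal \<tau> + Bn" by simp
  also have "\<dots> \<le> NA + ennreal lam * Cc + ennreal \<tau> * Hp + ennreal \<tau> * I + Bp"
    using main unfolding \<tau>_def .
  also have "\<dots> < \<infinity>" using fin Bp by (simp add: ennreal_mult_less_top)
  finally have Hn: "Hn < \<infinity>" using \<tau> by (auto simp: ennreal_mult_less_top top.not_eq_extremum)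
  have real: "\<exists>r. X = ennreal r \<and> r \<ge> 0" if "X < \<infinity>" for X :: ennreal
    using that by (cases X rule: ennreal_cases) auto
  obtain pa where pa: "PA = ennreal pa" "pa \<ge> 0" using real[OF PA] by blast
  obtain na where na: "NA = ennreal na" "na \<ge> 0" using real[OF fin(3)] by blast
  obtain cc where cc: "Cc = ennreal cc" "cc \<ge> 0" using real[OF fin(1)] by blast
  obtain hp where hp: "Hp = ennreal hp" "hp \<ge> 0" using real[OF fin(2)] by blast
  obtain hn where hn: "Hn = ennreal hn" "hn \<ge> 0" using real[OF Hn] by blast
  obtain i where i: "I = ennreal i" "i \<ge> 0" using real[OF fin(4)] by blast
  obtain bp where bp: "Bp = ennreal bp" "bp \<ge> 0" using real[OF Bp] by blast
  obtain bn where bn: "Bn = ennreal bn" "bn \<ge> 0" using real[OF Bn] by blast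
  note e = pa(1) na(1) cc(1) hp(1) hn(1) i(1) bp(1) bn(1)
  note nn = pa(2) na(2) cc(2) hp(2) hn(2) i(2) bp(2) bn(2)
  have "ennreal (pa + \<tau> * hn + \<tau> + bn) \<le> ennreal (na + lam * cc + \<tau> * hp + \<tau> * i + bp)"
    using main nn \<tau> lam unfolding e \<tau>_def[symmetric]
    by (simp add: ennreal_plus[symmetric] ennreal_mult[symmetric] del: ennreal_plus)
  then have "pa + \<tau> * hn + \<tau> + bn \<le> na + lam * cc + \<tau> * hp + \<tau> * i + bp"
    using nn \<tau> lam by (subst (asm) ennreal_le_iff) auto
  moreover have "\<tau> * i \<le> \<tau>" using I \<tau> unfolding e by (simp add: ennreal_le_1)
  moreover have "bp - bn = k" using k e nn by simp
  ultimately have "pa - na \<le> lam * (cc + eps * (hp - hn)) + k" unfolding \<tau>_def by (simp add: algebra_simps)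
  then show ?thesis using nn unfolding e by simp
qed

section \<open>Empirical measures and causal couplings\<close>

lemma sets_emp_measure:
  fixes Ph :: "('a::second_countable_topology \<times> 'b::second_countable_topology) pmf"
  shows "sets (emp_measure Ph) = sets (borel \<Otimes>\<^sub>M borel)"
  unfolding emp_measure_def borel_prod by simp

lemma space_emp_measure [simp]: "space (emp_measure Ph) = UNIV"
  unfolding emp_measure_def by simp

lemma prob_space_emp_measure: "prob_space (emp_measure Ph)"
  unfolding emp_measure_def by (intro prob_space.prob_space_distr prob_space_measure_pmf) simp

lemma set_pmf_in_borel: "set_pmf Ph \<in> sets (borel :: ('a::t1_space) measure)"
  by (rule sets.countable) (simp_all add: countable_set_pmf)

lemma AE_emp_measure_set_pmf:
  fixes Ph :: "('a::t1_space \<times> 'b::t1_space) pmf"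
  shows "AE z in emp_measure Ph. z \<in> set_pmf Ph"
  unfolding emp_measure_def using set_pmf_in_borel[of Ph]
  by (subst AE_distr_iff) (auto intro!: AE_measure_pmf)

lemma measure_emp_measure: "A \<in> sets borel \<Longrightarrow> measure (emp_measure Ph) A = measure_pmf.prob Ph A"
  unfolding emp_measure_def by (subst measure_distr) auto

lemma sum_pmf_fst_regroup:
  assumes "finite (set_pmf Ph)"
  shows "(\<Sum>z\<in>set_pmf Ph. pmf Ph z * h (fst z))
    = (\<Sum>x\<in>set_pmf (map_pmf fst Ph). pmf (map_pmf fst Ph) x * h x)"
proof -
  have "(\<Sum>z\<in>set_pmf Ph. pmf Ph z * h (fst z))
      = (\<Sum>x\<in>fst ` set_pmf Ph. \<Sum>z\<in>{z\<in>set_pmf Ph. fst z = x}. pmf Ph z * h (fst z))"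
    using assms by (rule sum.image_gen)
  also have "\<dots> = (\<Sum>x\<in>fst ` set_pmf Ph. pmf (map_pmf fst Ph) x * h x)"
  proof (intro sum.cong refl)
    fix x
    have "pmf (map_pmf fst Ph) x = measure_pmf.prob Ph (fst -` {x} \<inter> set_pmf Ph)"
      by (simp add: pmf_map measure_Int_set_pmf)
    also have "fst -` {x} \<inter> set_pmf Ph = {z\<in>set_pmf Ph. fst z = x}" by auto
    also have "measure_pmf.prob Ph {z\<in>set_pmf Ph. fst z = x} = (\<Sum>z\<in>{z\<in>set_pmf Ph. fst z = x}. pmf Ph z)"
      using assms by (intro measure_measure_pmf_finite) auto
    finally show "(\<Sum>z\<in>{z\<in>set_pmf Ph. fst z = x}. pmf Ph z * h (fst z)) = pmf (map_pmf fst Ph) x * h x"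
      by (simp add: sum_distrib_right)
  qed
  finally show ?thesis by simp
qed

text \<open>\<open>cond_avg Ph L xh x\<close> is the mean of \<open>L (xh, y') x\<close> over \<open>y'\<close> drawn from the conditional law
  of \<open>Y'\<close> given \<open>X' = xh\<close> under \<open>Ph\<close>; it is \<open>0\<close> when \<open>xh\<close> is off the support.\<close>

definition cond_weight :: "('a \<times> 'b) pmf \<Rightarrow> 'a \<times> 'b \<Rightarrow> real" where
  "cond_weight Ph z = pmf Ph z / pmf (map_pmf fst Ph) (fst z)"

definition cond_avg :: "('a \<times> 'b) pmf \<Rightarrow> ('a \<times> 'b \<Rightarrow> 'c \<Rightarrow> real) \<Rightarrow> 'a \<Rightarrow> 'c \<Rightarrow> real" where
  "cond_avg Ph L xh x = (\<Sum>z\<in>set_pmf Ph. if fst z = xh then cond_weight Ph z * L z x else 0)"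

lemma cond_weight_nonneg: "cond_weight Ph z \<ge> 0"
  unfolding cond_weight_def by simp

lemma cond_avg_le:
  assumes "\<And>z x. z \<in> set_pmf Ph \<Longrightarrow> L z x \<le> B z"
  shows "cond_avg Ph L xh x \<le> (\<Sum>z\<in>set_pmf Ph. cond_weight Ph z * max (B z) 0)"
  unfolding cond_avg_def
proof (intro sum_mono)
  fix z assume "z \<in> set_pmf Ph"
  then have "L z x \<le> max (B z) 0" using assms by (metis max.coboundedI1)
  then show "(if fst z = xh then cond_weight Ph z * L z x else 0) \<le> cond_weight Ph z * max (B z) 0"
    using cond_weight_nonneg[of Ph z] by (auto intro: mult_left_mono)
qed

lemma borel_measurable_cond_avg:
  fixes Ph :: "('a::t1_space \<times> 'b) pmf" and L :: "'a \<times> 'b \<Rightarrow> 'c::topological_space \<Rightarrow> real"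
  assumes "\<And>z. L z \<in> borel_measurable borel"
  shows "(\<lambda>t. cond_avg Ph L (fst t) (snd t)) \<in> borel_measurable (borel \<Otimes>\<^sub>M borel)"
proof -
  have [measurable]: "(\<lambda>t::'a \<times> 'c. L z (snd t)) \<in> borel_measurable (borel \<Otimes>\<^sub>M borel)" for z
    using assms by (intro measurable_compose[OF measurable_snd]) auto
  show ?thesis unfolding cond_avg_def by measurable
qed

locale causal_coupling =
  fixes Ph :: "('a::euclidean_space \<times> 'b::euclidean_space) pmf"
    and \<gamma> :: "(('a \<times> 'b) \<times> ('a \<times> 'b)) measure" and P :: "('a \<times> 'b) measure"
  assumes finite_support: "finite (set_pmf Ph)"
    and sets_coupling: "sets \<gamma> = sets ((borel \<Otimes>\<^sub>M borel) \<Otimes>\<^sub>M (borel \<Otimes>\<^sub>M borel))"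
    and coupling: "is_coupling \<gamma> (emp_measure Ph) P"
    and causal: "is_causal \<gamma>"
begin

lemma prob_space_coupling: "prob_space \<gamma>"
  using coupling unfolding is_coupling_def by simp

sublocale prob_space \<gamma>
  by (rule prob_space_coupling)

lemma space_coupling [simp]: "space \<gamma> = UNIV"
  using sets_eq_imp_space_eq[OF sets_coupling] by (simp add: space_pair_measure)

lemma measurable_coupling: "measurable \<gamma> = measurable ((borel \<Otimes>\<^sub>M borel) \<Otimes>\<^sub>M (borel \<Otimes>\<^sub>M borel))"
  by (intro ext measurable_cong_sets sets_coupling refl)

lemma measurable_fst_coupling: "fst \<in> measurable \<gamma> borel"
  unfolding measurable_coupling borel_prod[symmetric] by measurable

lemma measurable_snd_coupling: "snd \<in> measurable \<gamma> borel"
  unfolding measurable_coupling borel_prod[symmetric] by measurable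

lemma measurable_fst_snd_coupling: "(\<lambda>w. fst (snd w)) \<in> measurable \<gamma> borel"
  unfolding measurable_coupling by measurable

lemma distr_fst_coupling: "distr \<gamma> borel fst = emp_measure Ph"
  using coupling unfolding is_coupling_def by simp

lemma distr_snd_coupling: "distr \<gamma> borel snd = P"
  using coupling unfolding is_coupling_def by simp

lemma eexpect_snd_coupling:
  assumes "u \<in> borel_measurable borel"
  shows "eexpect P u = eexpect \<gamma> (\<lambda>w. u (snd w))"
  unfolding eexpect_def pos_int_def neg_int_def distr_snd_coupling[symmetric]
  using assms by (simp add: nn_integral_distr[OF measurable_snd_coupling])

lemma AE_fst_in_support: "AE w in \<gamma>. fst w \<in> set_pmf Ph"
proof -
  have "AE z in distr \<gamma> borel fst. z \<in> set_pmf Ph"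
    unfolding distr_fst_coupling by (rule AE_emp_measure_set_pmf)
  then show ?thesis
    using set_pmf_in_borel by (subst (asm) AE_distr_iff[OF measurable_fst_coupling]) auto
qed

lemma sets_fst_eq: "{w. fst w = z} \<in> sets \<gamma>"
  using measurable_sets[OF measurable_fst_coupling, of "{z}"] by (simp add: vimage_def)

lemma sets_fst_fst_eq: "{w. fst (fst w) = xh} \<in> sets \<gamma>"
proof -
  have "closed {z :: 'a \<times> 'b. fst z = xh}"
    by (intro closed_Collect_eq continuous_on_fst continuous_on_const continuous_on_id)
  then show ?thesis
    using measurable_sets[OF measurable_fst_coupling, of "{z. fst z = xh}"] by (simp add: vimage_def)
qed

lemma measure_fst_eq: "measure \<gamma> {w. fst w = z} = pmf Ph z"
proof -
  have "measure \<gamma> {w. fst w = z} = measure (distr \<gamma> borel fst) {z}"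
    by (subst measure_distr[OF measurable_fst_coupling]) (auto simp: vimage_def)
  then show ?thesis
    unfolding distr_fst_coupling by (simp add: measure_emp_measure measure_pmf_single)
qed

lemma measure_fst_fst_eq: "measure \<gamma> {w. fst (fst w) = xh} = pmf (map_pmf fst Ph) xh"
proof -
  have c: "closed {z :: 'a \<times> 'b. fst z = xh}"
    by (intro closed_Collect_eq continuous_on_fst continuous_on_const continuous_on_id)
  have "measure \<gamma> {w. fst (fst w) = xh} = measure (distr \<gamma> borel fst) {z. fst z = xh}"
    using c by (subst measure_distr[OF measurable_fst_coupling]) (auto simp: vimage_def)
  then show ?thesis
    unfolding distr_fst_coupling using c by (simp add: measure_emp_measure pmf_map vimage_def)
qed

text \<open>Causality with \<open>B = {y'}\<close>: given \<open>X'\<close>, the event \<open>Y' = y'\<close> is independent of \<open>X\<close>.\<close>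

lemma measure_causal:
  assumes "A \<in> sets borel"
  shows "measure \<gamma> {w. fst (snd w) \<in> A \<and> fst w = z} * pmf (map_pmf fst Ph) (fst z)
       = measure \<gamma> {w. fst (snd w) \<in> A \<and> fst (fst w) = fst z} * pmf Ph z"
proof -
  let ?xh = "fst z"
  have "\<forall>A \<in> sets borel. \<forall>B \<in> sets borel.
      measure \<gamma> {w \<in> space \<gamma>. fst (snd w) \<in> A \<and> snd (fst w) \<in> B \<and> fst (fst w) = ?xh}
        * measure \<gamma> {w \<in> space \<gamma>. fst (fst w) = ?xh}
      = measure \<gamma> {w \<in> space \<gamma>. fst (snd w) \<in> A \<and> fst (fst w) = ?xh}
        * measure \<gamma> {w \<in> space \<gamma>. snd (fst w) \<in> B \<and> fst (fst w) = ?xh}"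
    using causal unfolding is_causal_def by (rule spec)
  then have "measure \<gamma> {w \<in> space \<gamma>. fst (snd w) \<in> A \<and> snd (fst w) \<in> {snd z} \<and> fst (fst w) = ?xh}
        * measure \<gamma> {w \<in> space \<gamma>. fst (fst w) = ?xh}
      = measure \<gamma> {w \<in> space \<gamma>. fst (snd w) \<in> A \<and> fst (fst w) = ?xh}
        * measure \<gamma> {w \<in> space \<gamma>. snd (fst w) \<in> {snd z} \<and> fst (fst w) = ?xh}"
    using assms closed_singleton[of "snd z", THEN borel_closed] by blast
  moreover have "{w \<in> space \<gamma>. fst (snd w) \<in> A \<and> snd (fst w) \<in> {snd z} \<and> fst (fst w) = ?xh}
      = {w. fst (snd w) \<in> A \<and> fst w = z}" by (auto simp: prod_eq_iff)
  moreover have "{w \<in> space \<gamma>. snd (fst w) \<in> {snd z} \<and> fst (fst w) = ?xh} = {w. fst w = z}"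
    by (auto simp: prod_eq_iff)
  ultimately show ?thesis using measure_fst_eq[of z] measure_fst_fst_eq[of ?xh] by simp
qed

lemma integral_causal:
  assumes h: "h \<in> borel_measurable borel"
  shows "pmf (map_pmf fst Ph) (fst z) * (\<integral>w. indicator {w. fst w = z} w * h (fst (snd w)) \<partial>\<gamma>)
       = pmf Ph z * (\<integral>w. indicator {w. fst (fst w) = fst z} w * h (fst (snd w)) \<partial>\<gamma>)"
proof -
  define N where "N E c = distr (density \<gamma> (\<lambda>w. ennreal (c * indicator E w))) borel (\<lambda>w. fst (snd w))"
    for E and c :: real
  have meas_N: "(\<lambda>w. fst (snd w)) \<in> measurable (density \<gamma> (\<lambda>w. ennreal (c * indicator E w))) borel"
    for E and c :: real
    by (subst measurable_cong_sets[OF sets_density refl]) (rule measurable_fst_snd_coupling)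
  have emeasure_N: "emeasure (N E c) A = ennreal (c * measure \<gamma> (E \<inter> {w. fst (snd w) \<in> A}))"
    if "A \<in> sets borel" "E \<in> sets \<gamma>" "c \<ge> 0" for A E c
  proof -
    have pre: "{w. fst (snd w) \<in> A} \<in> sets \<gamma>"
      using measurable_sets[OF measurable_fst_snd_coupling that(1)] by (simp add: vimage_def)
    have "emeasure (N E c) A = (\<integral>\<^sup>+ w. ennreal c * indicator (E \<inter> {w. fst (snd w) \<in> A}) w \<partial>\<gamma>)"
      unfolding N_def using that pre
      by (subst emeasure_distr[OF meas_N], simp, subst emeasure_density)
        (auto intro!: nn_integral_cong split: split_indicator simp: vimage_def)
    also have "\<dots> = ennreal (c * measure \<gamma> (E \<inter> {w. fst (snd w) \<in> A}))"
      using that pre by (simp add: nn_integral_cmult_indicator emeasure_eq_measure ennreal_mult)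
    finally show ?thesis .
  qed
  have integral_N: "integral\<^sup>L (N E c) h = c * (\<integral>w. indicator E w * h (fst (snd w)) \<partial>\<gamma>)"
    if "E \<in> sets \<gamma>" "c \<ge> 0" for E c
  proof -
    have "integral\<^sup>L (N E c) h = (\<integral>w. (c * indicator E w) *\<^sub>R h (fst (snd w)) \<partial>\<gamma>)"
      unfolding N_def using that
      by (subst integral_distr[OF meas_N h], subst integral_density)
        (auto intro: measurable_compose[OF measurable_fst_snd_coupling h])
    then show ?thesis by (simp add: mult.assoc)
  qed
  define E1 where "E1 = {w :: ('a \<times> 'b) \<times> ('a \<times> 'b). fst w = z}"
  define E2 where "E2 = {w :: ('a \<times> 'b) \<times> ('a \<times> 'b). fst (fst w) = fst z}"
  have "N E1 (pmf (map_pmf fst Ph) (fst z)) = N E2 (pmf Ph z)"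
  proof (rule measure_eqI)
    fix A assume "A \<in> sets (N E1 (pmf (map_pmf fst Ph) (fst z)))"
    then have A: "A \<in> sets borel" unfolding N_def by simp
    have "E1 \<inter> {w. fst (snd w) \<in> A} = {w. fst (snd w) \<in> A \<and> fst w = z}"
      "E2 \<inter> {w. fst (snd w) \<in> A} = {w. fst (snd w) \<in> A \<and> fst (fst w) = fst z}"
      unfolding E1_def E2_def by auto
    then show "emeasure (N E1 (pmf (map_pmf fst Ph) (fst z))) A = emeasure (N E2 (pmf Ph z)) A"
      using A measure_causal[OF A, of z] sets_fst_eq sets_fst_fst_eq unfolding E1_def E2_def
      by (simp add: emeasure_N mult.commute)
  qed (simp add: N_def)
  then have "integral\<^sup>L (N E1 (pmf (map_pmf fst Ph) (fst z))) h = integral\<^sup>L (N E2 (pmf Ph z)) h"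
    by simp
  then show ?thesis
    using integral_N[OF sets_fst_eq] integral_N[OF sets_fst_fst_eq] unfolding E1_def E2_def by simp
qed

lemma integral_cond_avg:
  fixes L :: "'a \<times> 'b \<Rightarrow> 'a \<Rightarrow> real"
  assumes meas: "(\<lambda>t. L (fst t) (snd t)) \<in> borel_measurable ((borel \<Otimes>\<^sub>M borel) \<Otimes>\<^sub>M borel)"
    and bounded: "\<And>z x. z \<in> set_pmf Ph \<Longrightarrow> \<bar>L z x\<bar> \<le> B"
  shows "integrable \<gamma> (\<lambda>w. L (fst w) (fst (snd w)))"
    and "integrable \<gamma> (\<lambda>w. cond_avg Ph L (fst (fst w)) (fst (snd w)))"
    and "(\<integral>w. cond_avg Ph L (fst (fst w)) (fst (snd w)) \<partial>\<gamma>) = (\<integral>w. L (fst w) (fst (snd w)) \<partial>\<gamma>)"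
proof -
  define S where "S = set_pmf Ph"
  have slice: "L z \<in> borel_measurable borel" for z
    using measurable_Pair2[OF meas, of z] by (simp add: space_pair_measure)
  have integrable_term: "integrable \<gamma> (\<lambda>w. indicator E w * L z (fst (snd w)))"
    if "E \<in> sets \<gamma>" "z \<in> S" for E z
  proof (rule integrable_const_bound[where B = B])
    show "AE w in \<gamma>. norm (indicator E w * L z (fst (snd w))) \<le> B"
      using bounded[of z] that(2) abs_ge_zero[of "L z undefined"] unfolding S_def
      by (intro AE_I2) (auto simp: indicator_def simp del: abs_ge_zero intro: order_trans)
    show "(\<lambda>w. indicator E w * L z (fst (snd w))) \<in> borel_measurable \<gamma>"
      using that(1) measurable_compose[OF measurable_fst_snd_coupling slice] by measurable
  qed
  have L_sum: "AE w in \<gamma>. L (fst w) (fst (snd w)) = (\<Sum>z\<in>S. indicator {w. fst w = z} w * L z (fst (snd w)))"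
  proof (use AE_fst_in_support in eventually_elim)
    fix w :: "('a \<times> 'b) \<times> ('a \<times> 'b)" assume "fst w \<in> set_pmf Ph"
    then show "L (fst w) (fst (snd w)) = (\<Sum>z\<in>S. indicator {w. fst w = z} w * L z (fst (snd w)))"
      using finite_support unfolding S_def by (simp add: indicator_def eq_commute[of "fst w"])
  qed
  have G_sum: "cond_avg Ph L (fst (fst w)) (fst (snd w))
      = (\<Sum>z\<in>S. cond_weight Ph z * (indicator {w. fst (fst w) = fst z} w * L z (fst (snd w))))" for w
    unfolding cond_avg_def S_def by (intro sum.cong) (auto simp: indicator_def)
  have int_L_sum: "integrable \<gamma> (\<lambda>w. \<Sum>z\<in>S. indicator {w. fst w = z} w * L z (fst (snd w)))"
    by (intro Bochner_Integration.integrable_sum integrable_term sets_fst_eq)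
  have meas_L: "(\<lambda>w. L (fst w) (fst (snd w))) \<in> borel_measurable \<gamma>"
  proof -
    have "(\<lambda>w. (fst w, fst (snd w))) \<in> measurable \<gamma> ((borel \<Otimes>\<^sub>M borel) \<Otimes>\<^sub>M borel)"
      unfolding measurable_coupling by measurable
    from measurable_compose[OF this meas] show ?thesis by simp
  qed
  show int_L: "integrable \<gamma> (\<lambda>w. L (fst w) (fst (snd w)))"
    using integrable_cong_AE[OF meas_L borel_measurable_integrable[OF int_L_sum] L_sum] int_L_sum by simp
  show "integrable \<gamma> (\<lambda>w. cond_avg Ph L (fst (fst w)) (fst (snd w)))"
    unfolding G_sum by (intro Bochner_Integration.integrable_sum Bochner_Integration.integrable_mult_right integrable_term sets_fst_fst_eq)
  have "(\<integral>w. cond_avg Ph L (fst (fst w)) (fst (snd w)) \<partial>\<gamma>)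
      = (\<Sum>z\<in>S. cond_weight Ph z * (\<integral>w. indicator {w. fst (fst w) = fst z} w * L z (fst (snd w)) \<partial>\<gamma>))"
    unfolding G_sum by (subst Bochner_Integration.integral_sum) (auto intro!: Bochner_Integration.integrable_mult_right integrable_term sets_fst_fst_eq)
  also have "\<dots> = (\<Sum>z\<in>S. \<integral>w. indicator {w. fst w = z} w * L z (fst (snd w)) \<partial>\<gamma>)"
  proof (intro sum.cong refl)
    fix z assume "z \<in> S"
    then have "pmf (map_pmf fst Ph) (fst z) > 0"
      unfolding S_def by (simp add: pmf_positive)
    then show "cond_weight Ph z * (\<integral>w. indicator {w. fst (fst w) = fst z} w * L z (fst (snd w)) \<partial>\<gamma>)
        = (\<integral>w. indicator {w. fst w = z} w * L z (fst (snd w)) \<partial>\<gamma>)"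
      using integral_causal[OF slice, of z] unfolding cond_weight_def by (simp add: field_simps)
  qed
  also have "\<dots> = (\<integral>w. (\<Sum>z\<in>S. indicator {w. fst w = z} w * L z (fst (snd w))) \<partial>\<gamma>)"
    by (subst Bochner_Integration.integral_sum) (auto intro!: integrable_term sets_fst_eq)
  also have "\<dots> = (\<integral>w. L (fst w) (fst (snd w)) \<partial>\<gamma>)"
    using L_sum by (intro integral_cong_AE) (auto simp: meas_L AE_symmetric intro: borel_measurable_integrable[OF int_L_sum])
  finally show "(\<integral>w. cond_avg Ph L (fst (fst w)) (fst (snd w)) \<partial>\<gamma>) = (\<integral>w. L (fst w) (fst (snd w)) \<partial>\<gamma>)" .
qed

lemma integral_fst_fst:
  fixes K :: "'a \<Rightarrow> real"
  assumes K: "K \<in> borel_measurable borel"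
  shows "integrable \<gamma> (\<lambda>w. K (fst (fst w)))"
    and "(\<integral>w. K (fst (fst w)) \<partial>\<gamma>) = (\<Sum>z\<in>set_pmf Ph. pmf Ph z * K (fst z))"
proof -
  have K_fst: "(\<lambda>z. K (fst z)) \<in> borel_measurable (borel :: ('a \<times> 'b) measure)"
    using K unfolding borel_prod[symmetric] by measurable
  have "integrable (distr (measure_pmf Ph) borel (\<lambda>z. z)) (\<lambda>z. K (fst z))"
    using K_fst finite_support by (subst integrable_distr_eq) (auto intro: integrable_measure_pmf_finite)
  then show "integrable \<gamma> (\<lambda>w. K (fst (fst w)))"
    using K_fst by (subst integrable_distr_eq[OF measurable_fst_coupling, symmetric])
      (simp_all add: distr_fst_coupling emp_measure_def)
  have "(\<integral>w. K (fst (fst w)) \<partial>\<gamma>) = (\<integral>z. K (fst z) \<partial>distr \<gamma> borel fst)"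
    by (rule integral_distr[OF measurable_fst_coupling K_fst, symmetric])
  also have "\<dots> = (\<integral>z. K (fst z) \<partial>measure_pmf Ph)"
    unfolding distr_fst_coupling emp_measure_def using K_fst by (subst integral_distr) auto
  also have "\<dots> = (\<Sum>z\<in>set_pmf Ph. pmf Ph z * K (fst z))"
    using finite_support by (subst integral_measure_pmf[where A = "set_pmf Ph"]) auto
  finally show "(\<integral>w. K (fst (fst w)) \<partial>\<gamma>) = (\<Sum>z\<in>set_pmf Ph. pmf Ph z * K (fst z))" .
qed

end

section \<open>Log-partition functions of a bounded payoff\<close>

locale bounded_payoff =
  fixes Ph :: "('a::euclidean_space \<times> 'b::euclidean_space) pmf"
    and nuX :: "'a measure" and nuY :: "'b measure"
    and p lam eps M :: real and psi :: "'a \<times> 'b \<Rightarrow> real"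
  assumes finite_support: "finite (set_pmf Ph)"
    and p: "p \<ge> 0" and lam: "lam > 0" and eps: "eps > 0"
    and sets_nuX: "sets nuX = sets borel" and sets_nuY: "sets nuY = sets borel"
    and finite_nuX: "emeasure nuX (space nuX) < \<infinity>"
    and exp_moment_nuY: "\<And>\<delta>. \<delta> > 0 \<Longrightarrow> (\<integral>\<^sup>+ u. ennreal (exp (- \<delta> * norm u powr p)) \<partial>nuY) < \<infinity>"
    and measurable_psi: "psi \<in> borel_measurable (borel \<Otimes>\<^sub>M borel)"
    and psi_le: "\<And>v. psi v \<le> M"
begin

abbreviation \<tau> :: real where "\<tau> \<equiv> lam * eps"

lemma \<tau>_pos: "\<tau> > 0"
  using lam eps by simp

lemma space_nuX [simp]: "space nuX = UNIV"
  using sets_eq_imp_space_eq[OF sets_nuX] by simp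

lemma space_nuY [simp]: "space nuY = UNIV"
  using sets_eq_imp_space_eq[OF sets_nuY] by simp

lemma measurable_nuX: "measurable nuX = measurable borel"
  by (intro ext measurable_cong_sets sets_nuX refl)

lemma measurable_nuY: "measurable nuY = measurable borel"
  by (intro ext measurable_cong_sets sets_nuY refl)

lemma finite_measure_nuX: "finite_measure nuX"
  using finite_nuX by (intro finite_measureI) simp

lemma sigma_finite_nuX: "sigma_finite_measure nuX"
  using finite_measure_nuX by (rule finite_measure.sigma_finite_measure)

lemma sigma_finite_nuY: "sigma_finite_measure nuY"
  by (rule sigma_finite_of_positive_integrable[where h = "\<lambda>u. exp (- 1 * norm u powr p)"])
    (use exp_moment_nuY[of 1] in \<open>auto simp: measurable_nuY\<close>)

lemma borel_measurable_cost [measurable]: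
  "(\<lambda>w::('a \<times> 'b) \<times> ('a \<times> 'b). cost_p p (fst w) (snd w))
    \<in> borel_measurable ((borel \<Otimes>\<^sub>M borel) \<Otimes>\<^sub>M (borel \<Otimes>\<^sub>M borel))"
  unfolding cost_p_def by measurable

text \<open>\<open>part_Y\<close> and \<open>part_X\<close> mirror the \<open>y\<close>-integral inside \<open>g\<close> and the \<open>x\<close>-integral of the dual
  objective, with \<open>\<psi>\<close> in place of \<open>\<Psi> \<circ> f\<close>: \<open>\<lambda>\<epsilon> cond_avg Ph log_part_Y\<close> plays the role of \<open>g\<close>.
  The logarithm is truncated below at \<open>-T\<close> to make every term of the potential integrable.\<close>

definition part_Y :: "'a \<times> 'b \<Rightarrow> 'a \<Rightarrow> ennreal" where
  "part_Y z x = (\<integral>\<^sup>+ y. ennreal (exp ((psi (x, y) - lam * cost_p p z (x, y)) / \<tau>)) \<partial>nuY)"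

definition log_part_Y :: "'a \<times> 'b \<Rightarrow> 'a \<Rightarrow> real" where
  "log_part_Y z x = ln (enn2real (part_Y z x))"

definition log_part_Y_trunc :: "real \<Rightarrow> 'a \<times> 'b \<Rightarrow> 'a \<Rightarrow> real" where
  "log_part_Y_trunc T z x = max (log_part_Y z x) (- T)"

definition part_X :: "('a \<times> 'b \<Rightarrow> 'a \<Rightarrow> real) \<Rightarrow> 'a \<Rightarrow> ennreal" where
  "part_X L xh = (\<integral>\<^sup>+ x. ennreal (exp (cond_avg Ph L xh x)) \<partial>nuX)"

definition log_part_X :: "('a \<times> 'b \<Rightarrow> 'a \<Rightarrow> real) \<Rightarrow> 'a \<Rightarrow> real" where
  "log_part_X L xh = ln (enn2real (part_X L xh))"

definition log_part_shift :: "real \<Rightarrow> ('a \<times> 'b) \<times> ('a \<times> 'b) \<Rightarrow> real" where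
  "log_part_shift T w = log_part_X (log_part_Y_trunc T) (fst (fst w))
     - cond_avg Ph (log_part_Y_trunc T) (fst (fst w)) (fst (snd w))
     + log_part_Y_trunc T (fst w) (fst (snd w))"

definition potential :: "real \<Rightarrow> ('a \<times> 'b) \<times> ('a \<times> 'b) \<Rightarrow> real" where
  "potential T w = (psi (snd w) - lam * cost_p p (fst w) (snd w)) / \<tau> - log_part_shift T w"

lemma measurable_psi_slice: "(\<lambda>y. psi (x, y)) \<in> borel_measurable borel"
  using measurable_Pair2[OF measurable_psi, of x] by (simp add: space_pair_measure)

lemma borel_measurable_part_Y_integrand:
  "(\<lambda>y. ennreal (exp ((psi (x, y) - lam * cost_p p z (x, y)) / \<tau>))) \<in> borel_measurable nuY"
proof -
  note [measurable] = measurable_psi_slice[of x]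
  show ?thesis unfolding measurable_nuY cost_p_def fst_conv snd_conv by measurable
qed

lemma part_Y_le:
  "part_Y z x \<le> ennreal (exp (M / \<tau>)) * (\<integral>\<^sup>+ y. ennreal (exp (- (1 / eps) * norm (y - snd z) powr p)) \<partial>nuY)"
proof -
  have "part_Y z x \<le> (\<integral>\<^sup>+ y. ennreal (exp (M / \<tau>)) * ennreal (exp (- (1 / eps) * norm (y - snd z) powr p)) \<partial>nuY)"
    unfolding part_Y_def
  proof (intro nn_integral_mono)
    fix y
    have "lam * norm (y - snd z) powr p \<le> lam * cost_p p z (x, y)"
      using lam unfolding cost_p_def by simp
    then have "(psi (x, y) - lam * cost_p p z (x, y)) / \<tau> \<le> (M - lam * norm (y - snd z) powr p) / \<tau>"
      using psi_le[of "(x, y)"] \<tau>_pos by (intro divide_right_mono) auto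
    also have "\<dots> = M / \<tau> + (- (1 / eps) * norm (y - snd z) powr p)"
      using lam eps by (simp add: field_simps)
    finally show "ennreal (exp ((psi (x, y) - lam * cost_p p z (x, y)) / \<tau>))
        \<le> ennreal (exp (M / \<tau>)) * ennreal (exp (- (1 / eps) * norm (y - snd z) powr p))"
      by (simp add: ennreal_mult[symmetric] exp_add[symmetric] ennreal_leI)
  qed
  also have "\<dots> = ennreal (exp (M / \<tau>)) * (\<integral>\<^sup>+ y. ennreal (exp (- (1 / eps) * norm (y - snd z) powr p)) \<partial>nuY)"
    by (rule nn_integral_cmult) (simp add: measurable_nuY)
  finally show ?thesis .
qed

lemma exp_moment_shift_nuY:
  "(\<integral>\<^sup>+ y. ennreal (exp (- (1 / eps) * norm (y - c) powr p)) \<partial>nuY) < \<infinity>"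
  using eps by (intro nn_integral_exp_norm_shift_finite[OF sets_nuY p _ exp_moment_nuY]) auto

lemma part_Y_finite: "part_Y z x < \<infinity>"
  using part_Y_le[of z x] exp_moment_shift_nuY[of "snd z"]
  by (simp add: ennreal_mult_less_top le_less_trans)

lemma part_Y_pos:
  assumes "emeasure nuY UNIV \<noteq> 0"
  shows "part_Y z x > 0"
proof (rule ccontr)
  assume "\<not> part_Y z x > 0"
  then have "AE y in nuY. ennreal (exp ((psi (x, y) - lam * cost_p p z (x, y)) / \<tau>)) = 0"
    unfolding part_Y_def by (simp add: nn_integral_0_iff_AE[OF borel_measurable_part_Y_integrand])
  then have "UNIV \<in> null_sets nuY" by (simp add: AE_iff_null sets_nuY)
  then show False using assms by auto
qed

lemma borel_measurable_part_Y:
  "(\<lambda>t. part_Y (fst t) (snd t)) \<in> borel_measurable ((borel \<Otimes>\<^sub>M borel) \<Otimes>\<^sub>M borel)"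
proof -
  have sets: "sets (((borel \<Otimes>\<^sub>M borel) \<Otimes>\<^sub>M borel) \<Otimes>\<^sub>M nuY)
      = sets (((borel \<Otimes>\<^sub>M borel) \<Otimes>\<^sub>M borel) \<Otimes>\<^sub>M (borel :: 'b measure))"
    by (intro sets_pair_measure_cong refl sets_nuY)
  have "(\<lambda>(t, y). ennreal (exp ((psi (snd t, y) - lam * cost_p p (fst t) (snd t, y)) / \<tau>)))
      \<in> borel_measurable (((borel \<Otimes>\<^sub>M borel) \<Otimes>\<^sub>M borel) \<Otimes>\<^sub>M nuY)"
    unfolding measurable_cong_sets[OF sets refl] cost_p_def using measurable_psi by measurable
  from sigma_finite_measure.borel_measurable_nn_integral[OF sigma_finite_nuY this]
  show ?thesis unfolding part_Y_def by (simp add: case_prod_beta)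
qed

lemma borel_measurable_log_part_Y_trunc:
  "(\<lambda>t. log_part_Y_trunc T (fst t) (snd t)) \<in> borel_measurable ((borel \<Otimes>\<^sub>M borel) \<Otimes>\<^sub>M borel)"
  "(\<lambda>t. log_part_Y (fst t) (snd t)) \<in> borel_measurable ((borel \<Otimes>\<^sub>M borel) \<Otimes>\<^sub>M borel)"
  unfolding log_part_Y_trunc_def log_part_Y_def using borel_measurable_part_Y by measurable

lemma borel_measurable_log_part_Y_slice:
  "log_part_Y_trunc T z \<in> borel_measurable borel" "log_part_Y z \<in> borel_measurable borel"
  using measurable_Pair2[OF borel_measurable_log_part_Y_trunc(1), of z]
    measurable_Pair2[OF borel_measurable_log_part_Y_trunc(2), of z]
  by (simp_all add: space_pair_measure)

lemma log_part_Y_bounded_above: "\<exists>B. \<forall>x. log_part_Y z x \<le> B"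
proof -
  define C where "C = (\<integral>\<^sup>+ y. ennreal (exp (- (1 / eps) * norm (y - snd z) powr p)) \<partial>nuY)"
  have C: "C < \<infinity>" unfolding C_def by (rule exp_moment_shift_nuY)
  have "log_part_Y z x \<le> max 0 (ln (exp (M / \<tau>) * enn2real C))" for x
  proof (cases "enn2real (part_Y z x) = 0")
    case False
    then have pos: "enn2real (part_Y z x) > 0" using enn2real_nonneg[of "part_Y z x"] by linarith
    have "enn2real (part_Y z x) \<le> enn2real (ennreal (exp (M / \<tau>)) * C)"
      using part_Y_le[of z x] C unfolding C_def[symmetric]
      by (intro enn2real_mono) (auto simp: ennreal_mult_less_top)
    also have "\<dots> = exp (M / \<tau>) * enn2real C" by (simp add: enn2real_mult)
    finally show ?thesis unfolding log_part_Y_def using pos by (simp add: max.coboundedI2)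
  qed (simp add: log_part_Y_def)
  then show ?thesis by blast
qed

lemma abs_log_part_Y_trunc_bounded: "\<exists>B. \<forall>z\<in>set_pmf Ph. \<forall>x. \<bar>log_part_Y_trunc T z x\<bar> \<le> B"
proof -
  obtain B where B: "\<And>z x. log_part_Y z x \<le> B z" using log_part_Y_bounded_above by metis
  have "\<bar>log_part_Y_trunc T z x\<bar> \<le> (\<Sum>z\<in>set_pmf Ph. \<bar>B z\<bar>) + \<bar>T\<bar>" if "z \<in> set_pmf Ph" for z x
  proof -
    have "\<bar>B z\<bar> \<le> (\<Sum>z\<in>set_pmf Ph. \<bar>B z\<bar>)"
      using that finite_support by (intro member_le_sum) auto
    then show ?thesis using B[of z x] unfolding log_part_Y_trunc_def by linarith
  qed
  then show ?thesis by blast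
qed

lemma cond_avg_log_part_Y_bounded_above:
  "\<exists>C. \<forall>T\<ge>0. \<forall>xh x. cond_avg Ph (log_part_Y_trunc T) xh x \<le> C \<and> cond_avg Ph log_part_Y xh x \<le> C"
proof -
  obtain B where B: "\<And>z x. log_part_Y z x \<le> B z" using log_part_Y_bounded_above by metis
  have "log_part_Y_trunc T z x \<le> max (B z) 0" if "T \<ge> 0" for T z x
    using B[of z x] that unfolding log_part_Y_trunc_def by auto
  then show ?thesis
    using cond_avg_le[of Ph "log_part_Y_trunc _" "\<lambda>z. max (B z) 0"] cond_avg_le[of Ph log_part_Y B] B
    by (intro exI[of _ "\<Sum>z\<in>set_pmf Ph. cond_weight Ph z * max (B z) 0"]) auto
qed

lemma part_X_finite:
  assumes "\<And>x. cond_avg Ph L xh x \<le> C"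
  shows "part_X L xh < \<infinity>"
proof -
  have "part_X L xh \<le> (\<integral>\<^sup>+ x. ennreal (exp C) \<partial>nuX)"
    unfolding part_X_def using assms by (intro nn_integral_mono ennreal_leI) auto
  also have "\<dots> < \<infinity>" using finite_nuX by (simp add: ennreal_mult_less_top)
  finally show ?thesis .
qed

lemma part_X_log_part_Y_trunc_finite: "part_X (log_part_Y_trunc T) xh < \<infinity>"
proof -
  obtain B where B: "\<And>z x. log_part_Y z x \<le> B z" using log_part_Y_bounded_above by metis
  have "log_part_Y_trunc T z x \<le> max (B z) (- T)" for z x
    using B[of z x] unfolding log_part_Y_trunc_def by (simp add: max.coboundedI1 max.mono)
  then show ?thesis
    by (intro part_X_finite[where C = "\<Sum>z\<in>set_pmf Ph. cond_weight Ph z * max (max (B z) (- T)) 0"]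
        cond_avg_le) auto
qed

lemma borel_measurable_exp_cond_avg:
  assumes "\<And>z. L z \<in> borel_measurable borel"
  shows "(\<lambda>x. ennreal (exp (cond_avg Ph L xh x))) \<in> borel_measurable nuX"
proof -
  have [measurable]: "cond_avg Ph L xh \<in> borel_measurable borel"
    using measurable_Pair2[OF borel_measurable_cond_avg[where Ph = Ph and L = L, OF assms], of xh]
    by (simp add: space_pair_measure)
  show ?thesis unfolding measurable_nuX by measurable
qed

lemma part_X_pos:
  assumes "\<And>z. L z \<in> borel_measurable borel" and "emeasure nuX UNIV \<noteq> 0"
  shows "part_X L xh > 0"
proof (rule ccontr)
  assume "\<not> part_X L xh > 0"
  then have "AE x in nuX. ennreal (exp (cond_avg Ph L xh x)) = 0"
    unfolding part_X_def by (simp add: nn_integral_0_iff_AE[OF borel_measurable_exp_cond_avg[OF assms(1)]])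
  then have "UNIV \<in> null_sets nuX" by (simp add: AE_iff_null sets_nuX)
  then show False using assms(2) by auto
qed

lemma borel_measurable_log_part_X:
  assumes "\<And>z. L z \<in> borel_measurable borel"
  shows "log_part_X L \<in> borel_measurable borel"
proof -
  have sets: "sets (borel \<Otimes>\<^sub>M nuX) = sets ((borel :: 'a measure) \<Otimes>\<^sub>M (borel :: 'a measure))"
    by (intro sets_pair_measure_cong refl sets_nuX)
  note [measurable] = borel_measurable_cond_avg[where Ph = Ph and L = L, OF assms]
  have "(\<lambda>t. ennreal (exp (cond_avg Ph L (fst t) (snd t)))) \<in> borel_measurable (borel \<Otimes>\<^sub>M nuX)"
    unfolding measurable_cong_sets[OF sets refl] by measurable
  then have "(\<lambda>(xh, x). ennreal (exp (cond_avg Ph L xh x))) \<in> borel_measurable (borel \<Otimes>\<^sub>M nuX)"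
    by (simp add: case_prod_beta')
  from sigma_finite_measure.borel_measurable_nn_integral[OF sigma_finite_nuX this]
  show ?thesis unfolding log_part_X_def part_X_def by measurable
qed

lemma nn_integral_exp_log_part_X:
  assumes "\<And>z. L z \<in> borel_measurable borel" and "part_X L xh < \<infinity>"
  shows "(\<integral>\<^sup>+ x. ennreal (exp (cond_avg Ph L xh x - log_part_X L xh)) \<partial>nuX) \<le> 1"
proof -
  note meas = borel_measurable_exp_cond_avg[where xh = xh, OF assms(1)]
  define s where "s = enn2real (part_X L xh)"
  have s: "part_X L xh = ennreal s" "s \<ge> 0"
    unfolding s_def using assms(2) by (simp_all add: ennreal_enn2real_if)
  have "(\<integral>\<^sup>+ x. ennreal (exp (cond_avg Ph L xh x - log_part_X L xh)) \<partial>nuX)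
      = part_X L xh * ennreal (exp (- log_part_X L xh))"
    unfolding part_X_def
    by (subst nn_integral_multc[OF meas, symmetric])
      (simp add: ennreal_mult[symmetric] exp_diff exp_minus field_simps)
  also have "\<dots> \<le> 1"
  proof (cases "s = 0")
    case False
    then show ?thesis using s unfolding log_part_X_def s_def[symmetric]
      by (simp add: exp_minus ennreal_mult[symmetric] ennreal_leI)
  qed (use s in simp)
  finally show ?thesis .
qed

lemma nn_integral_exp_potential_Y:
  "(\<integral>\<^sup>+ y. ennreal (exp (potential T (z, (x, y)))) \<partial>nuY)
    \<le> ennreal (exp (cond_avg Ph (log_part_Y_trunc T) (fst z) x - log_part_X (log_part_Y_trunc T) (fst z)))"
proof -
  define G where "G = cond_avg Ph (log_part_Y_trunc T) (fst z) x - log_part_X (log_part_Y_trunc T) (fst z)"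
  define c where "c = exp (- log_part_Y_trunc T z x) * exp G"
  have "exp (potential T (z, (x, y))) = exp ((psi (x, y) - lam * cost_p p z (x, y)) / \<tau>) * c" for y
    unfolding potential_def log_part_shift_def c_def G_def exp_add[symmetric] by (simp add: algebra_simps)
  then have "(\<integral>\<^sup>+ y. ennreal (exp (potential T (z, (x, y)))) \<partial>nuY) = part_Y z x * ennreal c"
    unfolding part_Y_def c_def
    by (simp add: ennreal_mult nn_integral_multc[OF borel_measurable_part_Y_integrand])
  also have "\<dots> \<le> ennreal (exp G)"
  proof -
    define t where "t = enn2real (part_Y z x)"
    have t: "part_Y z x = ennreal t" "t \<ge> 0"
      unfolding t_def using part_Y_finite[of z x] by (simp_all add: ennreal_enn2real_if)
    have "t * c \<le> exp G"
    proof (cases "t = 0")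
      case False
      then have "t > 0" using t by simp
      moreover have "ln t \<le> log_part_Y_trunc T z x"
        unfolding log_part_Y_trunc_def log_part_Y_def t_def by simp
      ultimately have "t * exp (- log_part_Y_trunc T z x) \<le> 1"
        by (metis exp_ln exp_le_cancel_iff exp_minus_inverse mult_right_mono exp_ge_zero)
      then show ?thesis unfolding c_def by (simp add: mult.assoc mult_left_le_one_le)
    qed simp
    then show ?thesis using t unfolding c_def by (simp add: ennreal_mult[symmetric] ennreal_leI)
  qed
  finally show ?thesis unfolding G_def .
qed

lemma sets_ref_measure:
  "sets (ref_measure (emp_measure Ph) nuX nuY) = sets ((borel \<Otimes>\<^sub>M borel) \<Otimes>\<^sub>M (borel \<Otimes>\<^sub>M borel))"
  unfolding ref_measure_def by (intro sets_pair_measure_cong sets_emp_measure sets_nuX sets_nuY)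

lemma sigma_finite_nuXY: "sigma_finite_measure (nuX \<Otimes>\<^sub>M nuY)"
  by (intro sigma_finite_pair_measure sigma_finite_nuX sigma_finite_nuY)

lemma sigma_finite_ref_measure: "sigma_finite_measure (ref_measure (emp_measure Ph) nuX nuY)"
  unfolding ref_measure_def
  by (intro sigma_finite_pair_measure sigma_finite_nuXY prob_space_imp_sigma_finite prob_space_emp_measure)

lemma borel_measurable_potential:
  "potential T \<in> borel_measurable ((borel \<Otimes>\<^sub>M borel) \<Otimes>\<^sub>M (borel \<Otimes>\<^sub>M borel))"
proof -
  note slices = borel_measurable_log_part_Y_slice(1)[of T]
  note [measurable] =
    measurable_compose[OF measurable_snd measurable_psi]
    borel_measurable_compose_Pair[OF borel_measurable_log_part_Y_trunc(1)]
    borel_measurable_compose_Pair[OF borel_measurable_cond_avg[where Ph = Ph, OF slices]]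
    measurable_compose[OF _ borel_measurable_log_part_X[OF slices]]
  show ?thesis unfolding potential_def log_part_shift_def by measurable
qed

lemma nn_integral_exp_potential:
  "(\<integral>\<^sup>+ w. ennreal (exp (potential T w)) \<partial>ref_measure (emp_measure Ph) nuX nuY) \<le> 1"
proof -
  note meas = borel_measurable_potential[of T]
  have sets_nuXY: "sets (nuX \<Otimes>\<^sub>M nuY) = sets (borel \<Otimes>\<^sub>M borel)"
    by (intro sets_pair_measure_cong sets_nuX sets_nuY)
  have inner: "(\<integral>\<^sup>+ v. ennreal (exp (potential T (z, v))) \<partial>(nuX \<Otimes>\<^sub>M nuY)) \<le> 1" for z
  proof -
    have "(\<lambda>v. ennreal (exp (potential T (z, v)))) \<in> borel_measurable (nuX \<Otimes>\<^sub>M nuY)"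
      using measurable_Pair2[OF meas, of z] unfolding measurable_cong_sets[OF sets_nuXY refl]
      by (simp add: space_pair_measure)
    then have "(\<integral>\<^sup>+ v. ennreal (exp (potential T (z, v))) \<partial>(nuX \<Otimes>\<^sub>M nuY))
        = (\<integral>\<^sup>+ x. \<integral>\<^sup>+ y. ennreal (exp (potential T (z, (x, y)))) \<partial>nuY \<partial>nuX)"
      by (subst sigma_finite_measure.nn_integral_fst[OF sigma_finite_nuY, symmetric]) auto
    also have "\<dots> \<le> (\<integral>\<^sup>+ x. ennreal (exp (cond_avg Ph (log_part_Y_trunc T) (fst z) x
        - log_part_X (log_part_Y_trunc T) (fst z))) \<partial>nuX)"
      by (intro nn_integral_mono nn_integral_exp_potential_Y)
    also have "\<dots> \<le> 1"
      by (rule nn_integral_exp_log_part_X[OF borel_measurable_log_part_Y_slice(1) part_X_log_part_Y_trunc_finite])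
    finally show ?thesis .
  qed
  have "(\<lambda>w. ennreal (exp (potential T w))) \<in> borel_measurable (emp_measure Ph \<Otimes>\<^sub>M (nuX \<Otimes>\<^sub>M nuY))"
    using meas sets_ref_measure unfolding ref_measure_def by (subst measurable_cong_sets) auto
  then have "(\<integral>\<^sup>+ w. ennreal (exp (potential T w)) \<partial>ref_measure (emp_measure Ph) nuX nuY)
      = (\<integral>\<^sup>+ z. \<integral>\<^sup>+ v. ennreal (exp (potential T (z, v))) \<partial>(nuX \<Otimes>\<^sub>M nuY) \<partial>emp_measure Ph)"
    unfolding ref_measure_def
    by (subst sigma_finite_measure.nn_integral_fst[OF sigma_finite_nuXY, symmetric]) auto
  also have "\<dots> \<le> (\<integral>\<^sup>+ z. 1 \<partial>emp_measure Ph)" by (intro nn_integral_mono inner)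
  also have "\<dots> = 1" using prob_space.emeasure_space_1[OF prob_space_emp_measure] by simp
  finally show ?thesis .
qed

end

section \<open>Gibbs' inequality along a causal coupling\<close>

locale payoff_coupling =
  bounded_payoff Ph nuX nuY p lam eps M psi + causal_coupling Ph \<gamma> P
  for Ph nuX nuY p lam eps M psi \<gamma> P
begin

lemma integral_log_part_shift:
  "integrable \<gamma> (log_part_shift T)"
  "(\<integral>w. log_part_shift T w \<partial>\<gamma>) = (\<Sum>z\<in>set_pmf Ph. pmf Ph z * log_part_X (log_part_Y_trunc T) (fst z))"
proof -
  obtain B where "\<forall>z\<in>set_pmf Ph. \<forall>x. \<bar>log_part_Y_trunc T z x\<bar> \<le> B"
    using abs_log_part_Y_trunc_bounded by blast
  note L = integral_cond_avg[where B = B, OF borel_measurable_log_part_Y_trunc(1)[of T]]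
  note K = integral_fst_fst[OF borel_measurable_log_part_X[OF borel_measurable_log_part_Y_slice(1)[of T]]]
  show "integrable \<gamma> (log_part_shift T)"
    unfolding log_part_shift_def using L K \<open>\<forall>z\<in>set_pmf Ph. _\<close>
    by (intro Bochner_Integration.integrable_add Bochner_Integration.integrable_diff) auto
  show "(\<integral>w. log_part_shift T w \<partial>\<gamma>) = (\<Sum>z\<in>set_pmf Ph. pmf Ph z * log_part_X (log_part_Y_trunc T) (fst z))"
    unfolding log_part_shift_def using L K \<open>\<forall>z\<in>set_pmf Ph. _\<close>
    by (subst Bochner_Integration.integral_add Bochner_Integration.integral_diff,
        auto intro!: Bochner_Integration.integrable_diff)+
qed

lemma nn_integral_gibbs:
  fixes T :: real and q :: "('a \<times> 'b) \<times> ('a \<times> 'b) \<Rightarrow> ennreal"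
  assumes q: "AE w in \<gamma>. 0 < q w \<and> q w < \<infinity>" and meas_q: "q \<in> borel_measurable \<gamma>"
  defines "B w \<equiv> \<tau> * log_part_shift T w"
  shows "(\<integral>\<^sup>+ w. ennreal (psi (snd w)) \<partial>\<gamma>) + ennreal \<tau> * (\<integral>\<^sup>+ w. ennreal (- ln (enn2real (q w))) \<partial>\<gamma>)
      + ennreal \<tau> + (\<integral>\<^sup>+ w. ennreal (- B w) \<partial>\<gamma>)
    \<le> (\<integral>\<^sup>+ w. ennreal (- psi (snd w)) \<partial>\<gamma>) + ennreal lam * (\<integral>\<^sup>+ w. ennreal (cost_p p (fst w) (snd w)) \<partial>\<gamma>)
      + ennreal \<tau> * (\<integral>\<^sup>+ w. ennreal (ln (enn2real (q w))) \<partial>\<gamma>)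
      + ennreal \<tau> * (\<integral>\<^sup>+ w. ennreal (exp (potential T w)) / q w \<partial>\<gamma>) + (\<integral>\<^sup>+ w. ennreal (B w) \<partial>\<gamma>)"
proof -
  have "B \<in> borel_measurable \<gamma>"
    unfolding B_def using integral_log_part_shift(1) by (intro borel_measurable_integrable) simp
  note [measurable] = meas_q this
    measurable_compose[OF measurable_snd_coupling measurable_psi[unfolded borel_prod]]
    borel_measurable_potential[folded measurable_coupling] borel_measurable_cost[folded measurable_coupling]
  have "AE w in \<gamma>. ennreal (psi (snd w)) + ennreal \<tau> * ennreal (- ln (enn2real (q w))) + ennreal \<tau> + ennreal (- B w)
    \<le> ennreal (- psi (snd w)) + ennreal lam * ennreal (cost_p p (fst w) (snd w))
      + ennreal \<tau> * ennreal (ln (enn2real (q w)))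
      + ennreal \<tau> * (ennreal (exp (potential T w)) / q w) + ennreal (B w)"
  proof (use q in eventually_elim)
    fix w assume w: "0 < q w \<and> q w < \<infinity>"
    then have q: "q w = ennreal (enn2real (q w))" "enn2real (q w) > 0"
      by (auto simp: ennreal_enn2real_if enn2real_positive_iff)
    have "cost_p p (fst w) (snd w) \<ge> 0" unfolding cost_p_def by simp
    moreover have "\<tau> * potential T w = psi (snd w) - lam * cost_p p (fst w) (snd w) - B w"
      unfolding potential_def B_def using lam eps by (simp add: field_simps)
    ultimately show "ennreal (psi (snd w)) + ennreal \<tau> * ennreal (- ln (enn2real (q w))) + ennreal \<tau> + ennreal (- B w)
      \<le> ennreal (- psi (snd w)) + ennreal lam * ennreal (cost_p p (fst w) (snd w))
        + ennreal \<tau> * ennreal (ln (enn2real (q w)))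
        + ennreal \<tau> * (ennreal (exp (potential T w)) / q w) + ennreal (B w)"
      by (subst (3) q(1)) (rule gibbs_pointwise_ennreal[OF \<tau>_pos lam _ q(2)])
  qed
  then have "(\<integral>\<^sup>+ w. ennreal (psi (snd w)) + ennreal \<tau> * ennreal (- ln (enn2real (q w))) + ennreal \<tau>
      + ennreal (- B w) \<partial>\<gamma>)
    \<le> (\<integral>\<^sup>+ w. ennreal (- psi (snd w)) + ennreal lam * ennreal (cost_p p (fst w) (snd w))
      + ennreal \<tau> * ennreal (ln (enn2real (q w)))
      + ennreal \<tau> * (ennreal (exp (potential T w)) / q w) + ennreal (B w) \<partial>\<gamma>)"
    by (rule nn_integral_mono_AE)
  then show ?thesis by (simp add: nn_integral_add nn_integral_cmult emeasure_space_1[simplified])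
qed

text \<open>Gibbs' inequality \<open>E\<^sub>\<gamma> \<phi> \<le> H(\<gamma> | \<mu>) + ln (\<integral> exp \<phi> d\<mu>)\<close> for the potential \<open>\<phi>\<close>, whose
  exponential integrates to at most \<open>1\<close>; causality turns the \<open>\<gamma>\<close>-mean of its log-partition
  terms into a mean over the empirical distribution alone.\<close>

lemma eexpect_psi_le_of_abs_cont:
  assumes "absolutely_continuous (ref_measure (emp_measure Ph) nuX nuY) \<gamma>"
  shows "eexpect P (\<lambda>z. ereal (psi z))
    \<le> ereal lam * (enn2ereal (\<integral>\<^sup>+ w. ennreal (cost_p p (fst w) (snd w)) \<partial>\<gamma>)
        + ereal eps * rel_entropy \<gamma> (ref_measure (emp_measure Ph) nuX nuY))
      + ereal (\<tau> * (\<Sum>z\<in>set_pmf Ph. pmf Ph z * log_part_X (log_part_Y_trunc T) (fst z)))"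
proof -
  define \<mu> where "\<mu> = ref_measure (emp_measure Ph) nuX nuY"
  have sets_\<mu>: "sets \<gamma> = sets \<mu>" unfolding \<mu>_def using sets_coupling sets_ref_measure by simp
  have ac: "absolutely_continuous \<mu> \<gamma>" using assms unfolding \<mu>_def .
  have \<mu>: "sigma_finite_measure \<mu>" unfolding \<mu>_def by (rule sigma_finite_ref_measure)
  define q where "q = RN_deriv \<mu> \<gamma>"
  define B where "B w = \<tau> * log_part_shift T w" for w
  have q_AE: "AE w in \<gamma>. 0 < q w \<and> q w < \<infinity>" unfolding q_def
    by (rule AE_RN_deriv_pos_finite[OF \<mu> prob_space_imp_sigma_finite[OF prob_space_coupling] ac sets_\<mu>])
  have "q \<in> borel_measurable \<gamma>" unfolding q_def measurable_cong_sets[OF sets_\<mu> refl] by simp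
  note gibbs = nn_integral_gibbs[OF q_AE this, of T, folded B_def]
  have "(\<integral>\<^sup>+ w. ennreal (exp (potential T w)) / q w \<partial>\<gamma>) \<le> (\<integral>\<^sup>+ w. ennreal (exp (potential T w)) \<partial>\<mu>)"
    unfolding q_def using borel_measurable_potential[of T]
    by (intro nn_integral_divide_RN_deriv_le[OF \<mu> ac sets_\<mu>]) (simp add: measurable_cong_sets[OF sets_ref_measure refl] \<mu>_def)
  also have "\<dots> \<le> 1" unfolding \<mu>_def by (rule nn_integral_exp_potential)
  finally have exp_potential: "(\<integral>\<^sup>+ w. ennreal (exp (potential T w)) / q w \<partial>\<gamma>) \<le> 1" .
  have int_B: "integrable \<gamma> B" unfolding B_def
    by (intro Bochner_Integration.integrable_mult_right integral_log_part_shift)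
  then have B: "(\<integral>\<^sup>+ w. ennreal (B w) \<partial>\<gamma>) < \<infinity>" "(\<integral>\<^sup>+ w. ennreal (- B w) \<partial>\<gamma>) < \<infinity>"
    unfolding real_integrable_def by (auto simp: top.not_eq_extremum)
  have B_integral: "enn2real (\<integral>\<^sup>+ w. ennreal (B w) \<partial>\<gamma>) - enn2real (\<integral>\<^sup>+ w. ennreal (- B w) \<partial>\<gamma>)
      = \<tau> * (\<Sum>z\<in>set_pmf Ph. pmf Ph z * log_part_X (log_part_Y_trunc T) (fst z))"
    using real_lebesgue_integral_def[OF int_B] integral_log_part_shift(2)[of T] unfolding B_def by simp
  have "(\<integral>\<^sup>+ w. ennreal (psi (snd w)) \<partial>\<gamma>) \<le> (\<integral>\<^sup>+ w. ennreal M \<partial>\<gamma>)"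
    by (intro nn_integral_mono ennreal_leI psi_le)
  then have psi_pos: "(\<integral>\<^sup>+ w. ennreal (psi (snd w)) \<partial>\<gamma>) < \<infinity>"
    by (simp add: emeasure_space_1[simplified] le_less_trans)
  have "eexpect P (\<lambda>z. ereal (psi z))
      = enn2ereal (\<integral>\<^sup>+ w. ennreal (psi (snd w)) \<partial>\<gamma>) - enn2ereal (\<integral>\<^sup>+ w. ennreal (- psi (snd w)) \<partial>\<gamma>)"
    using measurable_psi unfolding borel_prod
    by (subst eexpect_snd_coupling) (auto simp: eexpect_def pos_int_def neg_int_def)
  moreover have "rel_entropy \<gamma> \<mu> = enn2ereal (\<integral>\<^sup>+ w. ennreal (ln (enn2real (q w))) \<partial>\<gamma>)
      - enn2ereal (\<integral>\<^sup>+ w. ennreal (- ln (enn2real (q w))) \<partial>\<gamma>)"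
    using sets_\<mu> ac unfolding rel_entropy_def eexpect_def pos_int_def neg_int_def q_def by simp
  ultimately show ?thesis unfolding \<mu>_def[symmetric]
    using ereal_le_of_ennreal_parts[OF lam eps psi_pos B exp_potential B_integral gibbs] by simp
qed

lemma eexpect_psi_le:
  "eexpect P (\<lambda>z. ereal (psi z))
    \<le> ereal lam * (enn2ereal (\<integral>\<^sup>+ w. ennreal (cost_p p (fst w) (snd w)) \<partial>\<gamma>)
        + ereal eps * rel_entropy \<gamma> (ref_measure (emp_measure Ph) nuX nuY))
      + ereal (\<tau> * (\<Sum>z\<in>set_pmf Ph. pmf Ph z * log_part_X (log_part_Y_trunc T) (fst z)))"
proof (cases "absolutely_continuous (ref_measure (emp_measure Ph) nuX nuY) \<gamma>")
  case False
  then have "rel_entropy \<gamma> (ref_measure (emp_measure Ph) nuX nuY) = \<infinity>"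
    unfolding rel_entropy_def by auto
  then show ?thesis using lam eps by simp
qed (rule eexpect_psi_le_of_abs_cont)

end

section \<open>Weak duality\<close>

context bounded_payoff
begin

lemma cond_avg_log_part_Y_trunc_tendsto:
  "(\<lambda>n. cond_avg Ph (log_part_Y_trunc (real n)) xh x) \<longlonglongrightarrow> cond_avg Ph log_part_Y xh x"
proof (rule tendsto_eventually)
  have "\<forall>\<^sub>F n in sequentially. \<forall>z\<in>set_pmf Ph. log_part_Y_trunc (real n) z x = log_part_Y z x"
  proof (rule eventually_ball_finite[OF finite_support], intro ballI)
    fix z
    show "\<forall>\<^sub>F n in sequentially. log_part_Y_trunc (real n) z x = log_part_Y z x"
      using eventually_ge_at_top[of "nat \<lceil>- log_part_Y z x\<rceil>"]
    proof eventually_elim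
      fix n assume "nat \<lceil>- log_part_Y z x\<rceil> \<le> n"
      then have "- log_part_Y z x \<le> real n" by linarith
      then show "log_part_Y_trunc (real n) z x = log_part_Y z x" unfolding log_part_Y_trunc_def by simp
    qed
  qed
  then show "\<forall>\<^sub>F n in sequentially. cond_avg Ph (log_part_Y_trunc (real n)) xh x = cond_avg Ph log_part_Y xh x"
    by eventually_elim (auto simp: cond_avg_def intro!: sum.cong)
qed

lemma part_X_log_part_Y_finite: "part_X log_part_Y xh < \<infinity>"
  using cond_avg_log_part_Y_bounded_above by (metis order.refl part_X_finite)

lemma log_part_X_trunc_tendsto:
  assumes "emeasure nuX UNIV \<noteq> 0"
  shows "(\<lambda>n. log_part_X (log_part_Y_trunc (real n)) xh) \<longlonglongrightarrow> log_part_X log_part_Y xh"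
proof -
  obtain C where C: "\<forall>T\<ge>0. \<forall>xh x. cond_avg Ph (log_part_Y_trunc T) xh x \<le> C \<and> cond_avg Ph log_part_Y xh x \<le> C"
    using cond_avg_log_part_Y_bounded_above by blast
  have "(\<lambda>n. part_X (log_part_Y_trunc (real n)) xh) \<longlonglongrightarrow> part_X log_part_Y xh"
    unfolding part_X_def
  proof (rule nn_integral_dominated_convergence[where w = "\<lambda>x. ennreal (exp C)"])
    show "AE x in nuX. ennreal (exp (cond_avg Ph (log_part_Y_trunc (real n)) xh x)) \<le> ennreal (exp C)" for n
      using C by (intro AE_I2 ennreal_leI) auto
    show "(\<integral>\<^sup>+ x. ennreal (exp C) \<partial>nuX) < \<infinity>"
      using finite_nuX by (simp add: ennreal_mult_less_top)
    show "AE x in nuX. (\<lambda>n. ennreal (exp (cond_avg Ph (log_part_Y_trunc (real n)) xh x)))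
        \<longlonglongrightarrow> ennreal (exp (cond_avg Ph log_part_Y xh x))"
      by (intro AE_I2 tendsto_ennrealI tendsto_exp cond_avg_log_part_Y_trunc_tendsto)
    show "(\<lambda>x. ennreal (exp (cond_avg Ph (log_part_Y_trunc (real n)) xh x))) \<in> borel_measurable nuX" for n
      by (rule borel_measurable_exp_cond_avg[OF borel_measurable_log_part_Y_slice(1)])
    show "(\<lambda>x. ennreal (exp (cond_avg Ph log_part_Y xh x))) \<in> borel_measurable nuX"
      by (rule borel_measurable_exp_cond_avg[OF borel_measurable_log_part_Y_slice(2)])
  qed simp
  then have "(\<lambda>n. enn2real (part_X (log_part_Y_trunc (real n)) xh)) \<longlonglongrightarrow> enn2real (part_X log_part_Y xh)"
    using part_X_log_part_Y_finite by (intro tendsto_enn2real) auto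
  moreover have "enn2real (part_X log_part_Y xh) \<noteq> 0"
    using part_X_log_part_Y_finite part_X_pos[where L = log_part_Y, OF borel_measurable_log_part_Y_slice(2) assms]
    by (simp add: enn2real_eq_0_iff top.not_eq_extremum order.strict_iff_not)
  ultimately show ?thesis unfolding log_part_X_def by (rule tendsto_ln)
qed

context
  fixes X :: "'a set" and Y :: "'b set" and \<Psi> :: "'c \<times> 'b \<Rightarrow> ereal" and f :: "'a \<Rightarrow> 'c"
  assumes AE_nuX: "AE x in nuX. x \<in> X" and AE_nuY: "AE y in nuY. y \<in> Y"
    and psi_le_\<Psi>: "\<And>x y. x \<in> X \<Longrightarrow> y \<in> Y \<Longrightarrow> ereal (psi (x, y)) \<le> \<Psi> (f x, y)"
begin

lemma log_part_Y_le_eln: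
  assumes "emeasure nuY UNIV \<noteq> 0" and "x \<in> X"
  shows "ereal (log_part_Y z x)
    \<le> eln (\<integral>\<^sup>+ y. eexp ((\<Psi> (f x, y) - ereal (lam * cost_p p z (x, y))) * ereal (1 / (lam * eps))) \<partial>nuY)"
proof -
  have "part_Y z x \<le> (\<integral>\<^sup>+ y. eexp ((\<Psi> (f x, y) - ereal (lam * cost_p p z (x, y))) * ereal (1 / \<tau>)) \<partial>nuY)"
    unfolding part_Y_def
  proof (rule nn_integral_mono_AE, use AE_nuY in eventually_elim)
    fix y assume "y \<in> Y"
    then have "(ereal (psi (x, y)) - ereal (lam * cost_p p z (x, y))) * ereal (1 / \<tau>)
        \<le> (\<Psi> (f x, y) - ereal (lam * cost_p p z (x, y))) * ereal (1 / \<tau>)"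
      using psi_le_\<Psi>[OF \<open>x \<in> X\<close>] \<tau>_pos by (intro ereal_mult_right_mono ereal_minus_mono) auto
    moreover have "(ereal (psi (x, y)) - ereal (lam * cost_p p z (x, y))) * ereal (1 / \<tau>)
        = ereal ((psi (x, y) - lam * cost_p p z (x, y)) / \<tau>)" by simp
    ultimately show "ennreal (exp ((psi (x, y) - lam * cost_p p z (x, y)) / \<tau>))
        \<le> eexp ((\<Psi> (f x, y) - ereal (lam * cost_p p z (x, y))) * ereal (1 / \<tau>))"
      by (metis eexp_ereal eexp_mono)
  qed
  then show ?thesis unfolding log_part_Y_def
    using part_Y_finite part_Y_pos[OF assms(1)] by (intro ln_enn2real_le_eln) auto
qed

lemma cond_avg_log_part_Y_le_g_fun:
  assumes "emeasure nuY UNIV \<noteq> 0" and "x \<in> X"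
  shows "ereal (cond_avg Ph log_part_Y xh x) \<le> g_fun p eps nuY \<Psi> f Ph xh x lam * ereal (1 / (lam * eps))"
proof -
  have "cond_avg Ph log_part_Y xh x
      = (\<Sum>z\<in>{z\<in>set_pmf Ph. fst z = xh}. pmf Ph z / pmf (map_pmf fst Ph) xh * log_part_Y z x)"
    unfolding cond_avg_def cond_weight_def using finite_support
    by (subst sum.inter_filter) (auto intro!: sum.cong)
  then have "ereal (\<tau> * cond_avg Ph log_part_Y xh x)
      = (\<Sum>z\<in>{z\<in>set_pmf Ph. fst z = xh}.
          ereal (pmf Ph z / pmf (map_pmf fst Ph) xh) * (ereal \<tau> * ereal (log_part_Y z x)))"
    by (simp add: sum_distrib_left algebra_simps)
  also have "\<dots> \<le> g_fun p eps nuY \<Psi> f Ph xh x lam"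
    unfolding g_fun_def using \<tau>_pos
    by (intro sum_mono ereal_mult_left_mono log_part_Y_le_eln[OF assms]) auto
  finally have "ereal (\<tau> * cond_avg Ph log_part_Y xh x) * ereal (1 / \<tau>)
      \<le> g_fun p eps nuY \<Psi> f Ph xh x lam * ereal (1 / \<tau>)"
    using \<tau>_pos by (intro ereal_mult_right_mono) auto
  moreover have "ereal (\<tau> * cond_avg Ph log_part_Y xh x) * ereal (1 / \<tau>) = ereal (cond_avg Ph log_part_Y xh x)"
    using lam eps by simp
  ultimately show ?thesis by simp
qed

lemma dual_obj_ge:
  assumes "emeasure nuX UNIV \<noteq> 0" and "emeasure nuY UNIV \<noteq> 0"
  shows "ereal (lam * rho powr p) + ereal (\<tau> * (\<Sum>z\<in>set_pmf Ph. pmf Ph z * log_part_X log_part_Y (fst z)))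
     \<le> dual_obj p eps rho nuX nuY \<Psi> f Ph lam"
proof -
  define J where "J xh = (\<integral>\<^sup>+ x. eexp (g_fun p eps nuY \<Psi> f Ph xh x lam * ereal (1 / \<tau>)) \<partial>nuX)" for xh
  have "part_X log_part_Y xh \<le> J xh" for xh
    unfolding part_X_def J_def
    using cond_avg_log_part_Y_le_g_fun[OF assms(2)] eexp_mono
    by (intro nn_integral_mono_AE, use AE_nuX in eventually_elim) (metis eexp_ereal)
  then have "ereal (log_part_X log_part_Y xh) \<le> eln (J xh)" for xh
    unfolding log_part_X_def
    using part_X_log_part_Y_finite part_X_pos[where L = log_part_Y, OF borel_measurable_log_part_Y_slice(2) assms(1)]
    by (intro ln_enn2real_le_eln) auto
  then have K: "ereal (\<tau> * log_part_X log_part_Y xh) \<le> ereal \<tau> * eln (J xh)" for xh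
    using \<tau>_pos ereal_mult_left_mono[of _ _ "ereal \<tau>"] by (metis times_ereal.simps(1) ereal_less_eq(5) less_imp_le)
  have "ereal (\<tau> * (\<Sum>z\<in>set_pmf Ph. pmf Ph z * log_part_X log_part_Y (fst z)))
      = (\<Sum>xh\<in>set_pmf (map_pmf fst Ph). ereal (pmf (map_pmf fst Ph) xh) * ereal (\<tau> * log_part_X log_part_Y xh))"
    unfolding sum_pmf_fst_regroup[OF finite_support] by (simp add: sum_distrib_left algebra_simps)
  also have "\<dots> \<le> (\<Sum>xh\<in>set_pmf (map_pmf fst Ph). ereal (pmf (map_pmf fst Ph) xh) * (ereal \<tau> * eln (J xh)))"
    by (intro sum_mono ereal_mult_left_mono K) auto
  finally show ?thesis unfolding dual_obj_def J_def by (intro add_left_mono) simp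
qed

end

lemma reference_measures_nonzero:
  assumes sets: "sets \<gamma> = sets (ref_measure (emp_measure Ph) nuX nuY)" and "prob_space \<gamma>"
    and "rel_entropy \<gamma> (ref_measure (emp_measure Ph) nuX nuY) \<noteq> \<infinity>"
  shows "emeasure nuX UNIV \<noteq> 0 \<and> emeasure nuY UNIV \<noteq> 0"
proof (rule ccontr)
  let ?\<mu> = "ref_measure (emp_measure Ph) nuX nuY"
  have space_\<mu>: "space ?\<mu> = UNIV"
    using sets_eq_imp_space_eq[OF sets_ref_measure] by (simp add: space_pair_measure)
  assume "\<not> ?thesis"
  then have "emeasure (nuX \<Otimes>\<^sub>M nuY) (UNIV \<times> UNIV) = 0"
    by (subst sigma_finite_measure.emeasure_pair_measure_Times[OF sigma_finite_nuY])
      (auto simp: sets_nuX sets_nuY)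
  then have "emeasure ?\<mu> (UNIV \<times> (UNIV \<times> UNIV)) = 0"
    unfolding ref_measure_def using sets.top[of "emp_measure Ph"] sets.top[of "nuX \<Otimes>\<^sub>M nuY"]
    by (subst sigma_finite_measure.emeasure_pair_measure_Times[OF sigma_finite_nuXY])
      (auto simp: space_pair_measure)
  then have "UNIV \<in> null_sets ?\<mu>"
    using sets.top[of ?\<mu>] space_\<mu> by (intro null_setsI) auto
  moreover have "absolutely_continuous ?\<mu> \<gamma>"
    using assms(3) unfolding rel_entropy_def by (auto split: if_splits)
  ultimately have "emeasure \<gamma> UNIV = 0"
    unfolding absolutely_continuous_def by (auto dest: null_setsD1)
  moreover have "space \<gamma> = UNIV" using sets_eq_imp_space_eq[OF sets] space_\<mu> by simp
  ultimately show False using prob_space.emeasure_space_1[OF assms(2)] by simp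
qed

lemma eexpect_psi_le_dual_obj:
  fixes X :: "'a set" and Y :: "'b set" and \<Psi> :: "'c \<times> 'b \<Rightarrow> ereal" and f :: "'a \<Rightarrow> 'c"
  assumes AE_nuX: "AE x in nuX. x \<in> X" and AE_nuY: "AE y in nuY. y \<in> Y"
    and psi_le_\<Psi>: "\<And>x y. x \<in> X \<Longrightarrow> y \<in> Y \<Longrightarrow> ereal (psi (x, y)) \<le> \<Psi> (f x, y)"
    and feasible: "causal_sinkhorn_p p eps nuX nuY (emp_measure Ph) P \<le> ereal (rho powr p)"
  shows "eexpect P (\<lambda>z. ereal (psi z)) \<le> dual_obj p eps rho nuX nuY \<Psi> f Ph lam"
proof -
  define \<Gamma> where "\<Gamma> = {\<gamma>. sets \<gamma> = sets (ref_measure (emp_measure Ph) nuX nuY)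
    \<and> is_coupling \<gamma> (emp_measure Ph) P \<and> is_causal \<gamma>}"
  define V where "V \<gamma> = enn2ereal (\<integral>\<^sup>+ w. ennreal (cost_p p (fst w) (snd w)) \<partial>\<gamma>)
    + ereal eps * rel_entropy \<gamma> (ref_measure (emp_measure Ph) nuX nuY)" for \<gamma>
  have inf: "(INF \<gamma>\<in>\<Gamma>. V \<gamma>) \<le> ereal (rho powr p)"
    using feasible unfolding causal_sinkhorn_p_def \<Gamma>_def V_def .
  then have "(INF \<gamma>\<in>\<Gamma>. V \<gamma>) < \<infinity>" by (rule le_less_trans) simp
  then obtain \<gamma> where "\<gamma> \<in> \<Gamma>" "V \<gamma> < \<infinity>" unfolding INF_less_iff by blast
  then have nonzero: "emeasure nuX UNIV \<noteq> 0 \<and> emeasure nuY UNIV \<noteq> 0"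
    using eps unfolding \<Gamma>_def V_def is_coupling_def
    by (intro reference_measures_nonzero[where \<gamma> = \<gamma>]) auto
  have "eexpect P (\<lambda>z. ereal (psi z)) \<le> ereal (lam * rho powr p
      + \<tau> * (\<Sum>z\<in>set_pmf Ph. pmf Ph z * log_part_X (log_part_Y_trunc (real n)) (fst z)))" for n
  proof -
    have "eexpect P (\<lambda>z. ereal (psi z)) \<le> ereal lam * ereal (rho powr p)
        + ereal (\<tau> * (\<Sum>z\<in>set_pmf Ph. pmf Ph z * log_part_X (log_part_Y_trunc (real n)) (fst z)))"
    proof (rule ereal_le_affine_of_INF_le[OF lam _ inf])
      fix \<gamma> assume "\<gamma> \<in> \<Gamma>"
      then interpret payoff_coupling Ph nuX nuY p lam eps M psi \<gamma> P
        by unfold_locales (auto simp: \<Gamma>_def sets_ref_measure finite_support)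
      show "eexpect P (\<lambda>z. ereal (psi z)) \<le> ereal lam * V \<gamma>
          + ereal (\<tau> * (\<Sum>z\<in>set_pmf Ph. pmf Ph z * log_part_X (log_part_Y_trunc (real n)) (fst z)))"
        unfolding V_def by (rule eexpect_psi_le)
    qed
    then show ?thesis by simp
  qed
  moreover have "(\<lambda>n. lam * rho powr p
      + \<tau> * (\<Sum>z\<in>set_pmf Ph. pmf Ph z * log_part_X (log_part_Y_trunc (real n)) (fst z)))
    \<longlonglongrightarrow> lam * rho powr p + \<tau> * (\<Sum>z\<in>set_pmf Ph. pmf Ph z * log_part_X log_part_Y (fst z))"
    using nonzero
    by (intro tendsto_add tendsto_const tendsto_mult_left tendsto_sum log_part_X_trunc_tendsto) auto
  ultimately have "eexpect P (\<lambda>z. ereal (psi z))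
      \<le> ereal (lam * rho powr p + \<tau> * (\<Sum>z\<in>set_pmf Ph. pmf Ph z * log_part_X log_part_Y (fst z)))"
    by (rule ereal_le_of_tendsto)
  also have "\<dots> \<le> dual_obj p eps rho nuX nuY \<Psi> f Ph lam"
    using dual_obj_ge[OF AE_nuX AE_nuY psi_le_\<Psi>] nonzero by simp
  finally show ?thesis .
qed

end

lemma emeasure_space_finite_of_exp_moment:
  fixes \<nu> :: "'a::real_normed_vector measure"
  assumes "bounded X" and "AE x in \<nu>. x \<in> X" and "p \<ge> 0"
    and "(\<integral>\<^sup>+ u. ennreal (exp (- (norm u powr p))) \<partial>\<nu>) < \<infinity>"
  shows "emeasure \<nu> (space \<nu>) < \<infinity>"
proof -
  obtain R where R: "\<And>x. x \<in> X \<Longrightarrow> norm x \<le> R" "R \<ge> 0"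
    using assms(1) unfolding bounded_iff by (metis norm_ge_zero order.trans linear)
  have "ennreal (exp (- (R powr p))) * emeasure \<nu> (space \<nu>) = (\<integral>\<^sup>+ u. ennreal (exp (- (R powr p))) \<partial>\<nu>)"
    by simp
  also have "\<dots> \<le> (\<integral>\<^sup>+ u. ennreal (exp (- (norm u powr p))) \<partial>\<nu>)"
  proof (rule nn_integral_mono_AE, use assms(2) in eventually_elim)
    fix u assume "u \<in> X"
    then have "norm u powr p \<le> R powr p" using R assms(3) by (intro powr_mono2) auto
    then show "ennreal (exp (- (R powr p))) \<le> ennreal (exp (- (norm u powr p)))" by (intro ennreal_leI) simp
  qed
  also have "\<dots> < \<infinity>" by (rule assms(4))
  finally show ?thesis by (auto simp: ennreal_mult_less_top)
qed

definition trunc_payoff ::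
  "'a set \<Rightarrow> 'b set \<Rightarrow> ('c \<times> 'b \<Rightarrow> ereal) \<Rightarrow> ('a \<Rightarrow> 'c) \<Rightarrow> nat \<Rightarrow> 'a \<times> 'b \<Rightarrow> real" where
  "trunc_payoff X Y \<Psi> f n v =
     (if fst v \<in> X \<and> snd v \<in> Y then real_of_ereal (min (\<Psi> (f (fst v), snd v)) (ereal (real n))) else 0)"

lemma trunc_payoff_le: "trunc_payoff X Y \<Psi> f n v \<le> real n"
  unfolding trunc_payoff_def by (cases "\<Psi> (f (fst v), snd v)") (auto simp: min_def)

lemma trunc_payoff_eq:
  assumes "z \<in> X \<times> Y" "\<Psi> (f (fst z), snd z) \<noteq> - \<infinity>"
  shows "ereal (trunc_payoff X Y \<Psi> f n z) = min (\<Psi> (f (fst z), snd z)) (ereal (real n))"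
  using assms unfolding trunc_payoff_def by (cases "\<Psi> (f (fst z), snd z)") (auto simp: min_def)

lemma borel_measurable_trunc_payoff:
  fixes X :: "'a::euclidean_space set" and Y :: "'b::euclidean_space set" and Z :: "'c::euclidean_space set"
  assumes [measurable]: "X \<in> sets borel" "Y \<in> sets borel" "Z \<in> sets borel" and "f ` X \<subseteq> Z"
    and \<Psi>: "\<Psi> \<in> borel_measurable (restrict_space borel (Z \<times> Y))"
    and f: "f \<in> borel_measurable (restrict_space borel X)"
  shows "trunc_payoff X Y \<Psi> f n \<in> borel_measurable (borel \<Otimes>\<^sub>M borel)"
proof -
  define \<Psi>' where "\<Psi>' v = (if v \<in> Z \<times> Y then \<Psi> v else 0)" for v
  define f' where "f' x = (if x \<in> X then f x else 0)" for x
  have "Z \<times> Y \<in> sets (borel :: ('c \<times> 'b) measure)"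
    unfolding borel_prod[symmetric] by measurable
  then have \<Psi>': "\<Psi>' \<in> borel_measurable (borel \<Otimes>\<^sub>M borel)"
    using \<Psi> unfolding \<Psi>'_def borel_prod by (subst (asm) measurable_restrict_space_iff) auto
  have [measurable]: "f' \<in> borel_measurable borel"
    using f unfolding f'_def by (subst (asm) measurable_restrict_space_iff) auto
  have [measurable]: "(\<lambda>v. \<Psi>' (f' (fst v), snd v)) \<in> borel_measurable (borel \<Otimes>\<^sub>M borel)"
    by (rule measurable_compose[OF _ \<Psi>']) measurable
  have "trunc_payoff X Y \<Psi> f n
      = (\<lambda>v. if fst v \<in> X \<and> snd v \<in> Y then real_of_ereal (min (\<Psi>' (f' (fst v), snd v)) (ereal (real n))) else 0)"
    using assms(4) unfolding trunc_payoff_def \<Psi>'_def f'_def by (auto simp: fun_eq_iff)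
  then show ?thesis by (simp only:) measurable
qed

lemma bounded_payoff_trunc_payoff:
  fixes X :: "'a::euclidean_space set" and Y :: "'b::euclidean_space set" and Z :: "'c::euclidean_space set"
  assumes "compact X" and "X \<in> sets borel" "Y \<in> sets borel" "Z \<in> sets borel" and "f ` X \<subseteq> Z"
    and "\<Psi> \<in> borel_measurable (restrict_space borel (Z \<times> Y))"
    and "f \<in> borel_measurable (restrict_space borel X)"
    and "finite (set_pmf Ph)" and "p \<ge> 0" and "lam > 0" and "eps > 0"
    and "sets nuX = sets borel" and "sets nuY = sets borel" and "AE x in nuX. x \<in> X"
    and "(\<integral>\<^sup>+ u. ennreal (exp (- (norm u powr p))) \<partial>nuX) < \<infinity>"
    and "\<And>\<delta>. \<delta> > 0 \<Longrightarrow> (\<integral>\<^sup>+ u. ennreal (exp (- \<delta> * norm u powr p)) \<partial>nuY) < \<infinity>"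
  shows "bounded_payoff Ph nuX nuY p lam eps (real n) (trunc_payoff X Y \<Psi> f n)"
proof
  show "(\<integral>\<^sup>+ u. ennreal (exp (- \<delta> * norm u powr p)) \<partial>nuY) < \<infinity>" if "\<delta> > 0" for \<delta>
    using assms(16) that .
  show "trunc_payoff X Y \<Psi> f n \<in> borel_measurable (borel \<Otimes>\<^sub>M borel)"
    by (rule borel_measurable_trunc_payoff[OF assms(2-7)])
  show "emeasure nuX (space nuX) < \<infinity>"
    using assms(1,9,14,15) by (intro emeasure_space_finite_of_exp_moment[OF compact_imp_bounded])
qed (use assms(8-13) trunc_payoff_le in auto)

theorem lemma2:
  fixes X :: "'a::euclidean_space set" and Y :: "'b::euclidean_space set" and Z :: "'c::euclidean_space set"
    and \<Psi> :: "'c \<times> 'b \<Rightarrow> ereal" and f :: "'a \<Rightarrow> 'c"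
    and Ph :: "('a \<times> 'b) pmf"
    and p \<rho> \<epsilon> :: real
    and nuX :: "'a measure" and nuY :: "'b measure"
  assumes "compact X"
    and "X \<in> sets borel" and "Y \<in> sets borel" and "Z \<in> sets borel"
    and "f ` X \<subseteq> Z"
    and "\<forall>z\<in>Z. \<forall>y\<in>Y. \<Psi> (z, y) \<noteq> -\<infinity>"
    and "\<Psi> \<in> borel_measurable (restrict_space borel (Z \<times> Y))"
    and "f \<in> borel_measurable (restrict_space borel X)"
    and "finite (set_pmf Ph)" and "set_pmf Ph \<subseteq> X \<times> Y"
    and "p \<ge> 1" and "\<rho> \<ge> 0" and "\<epsilon> > 0"
    and "sets nuX = sets borel" and "sets nuY = sets borel"
    and "AE x in nuX. x \<in> X" and "AE y in nuY. y \<in> Y"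
    and "\<And>\<delta>. \<delta> > 0 \<Longrightarrow> (\<integral>\<^sup>+ u. ennreal (exp (- \<delta> * norm u powr p)) \<partial>nuX) < \<infinity>"
    and "\<And>\<delta>. \<delta> > 0 \<Longrightarrow> (\<integral>\<^sup>+ u. ennreal (exp (- \<delta> * norm u powr p)) \<partial>nuY) < \<infinity>"
  shows "primal_value p \<epsilon> \<rho> X Y nuX nuY \<Psi> f Ph \<le> dual_value p \<epsilon> \<rho> nuX nuY \<Psi> f Ph"
  unfolding primal_value_def dual_value_def
proof (intro SUP_least INF_greatest)
  fix P and lam :: real
  assume P: "P \<in> {P. prob_space P \<and> sets P = sets (borel :: ('a \<times> 'b) measure) \<and> (AE z in P. z \<in> X \<times> Y)
      \<and> expect_defined P (\<lambda>z. \<Psi> (f (fst z), snd z))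
      \<and> causal_sinkhorn_p p \<epsilon> nuX nuY (emp_measure Ph) P \<le> ereal (\<rho> powr p)}"
    and "lam \<in> {0<..}"
  have payoff: "bounded_payoff Ph nuX nuY p lam \<epsilon> (real n) (trunc_payoff X Y \<Psi> f n)" for n
    using assms(11,13-16,19) assms(18)[of 1] \<open>lam \<in> {0<..}\<close>
    by (intro bounded_payoff_trunc_payoff[OF assms(1-5,7-9)]) auto
  have trunc_eq: "ereal (trunc_payoff X Y \<Psi> f n z) = min (\<Psi> (f (fst z), snd z)) (ereal (real n))"
    if "z \<in> X \<times> Y" for n z
    using that assms(5,6) by (intro trunc_payoff_eq) auto
  have sets_P: "sets P = sets (borel \<Otimes>\<^sub>M borel)" unfolding borel_prod using P by simp
  have "AE z in P. z \<in> X \<times> Y" using P by simp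
  show "eexpect P (\<lambda>z. \<Psi> (f (fst z), snd z)) \<le> dual_obj p \<epsilon> \<rho> nuX nuY \<Psi> f Ph lam"
  proof (rule eexpect_le_of_truncations[where v = "trunc_payoff X Y \<Psi> f"])
    show "AE z in P. \<forall>n. ereal (trunc_payoff X Y \<Psi> f n z) = min (\<Psi> (f (fst z), snd z)) (ereal (real n))"
      using \<open>AE z in P. z \<in> X \<times> Y\<close> by eventually_elim (simp add: trunc_eq)
    show "trunc_payoff X Y \<Psi> f n \<in> borel_measurable P" for n
      unfolding measurable_cong_sets[OF sets_P refl] by (rule borel_measurable_trunc_payoff[OF assms(2-5,7,8)])
    show "eexpect P (\<lambda>z. ereal (trunc_payoff X Y \<Psi> f n z)) \<le> dual_obj p \<epsilon> \<rho> nuX nuY \<Psi> f Ph lam" for n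
      using trunc_eq[of "(x, y)" for x y] P
      by (intro bounded_payoff.eexpect_psi_le_dual_obj[OF payoff assms(16,17)]) auto
  qed (use P in simp)
qed

end
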